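(* For $n\geq 1$ and $m\geq 2$, the forcing spectrum $\mathrm{Spec}(T(2n+1,2m))$ is an integer interval (i.e. it is continuous).
   Context: $T(2n+1,2m)$ is the graph with vertices $(u_i,v_j)$, $i\in\mathbb{Z}_{2m}$, $j\in\mathbb{Z}_{2n+1}$, where $(u_i,v_j)$ is adjacent to $(u_{i+1},v_j)$ and to $(u_i,v_{j+1})$. For a perfect matching $M$ of a graph $G$, a subset $S\subseteq M$ is a forcing set of $M$ if no other perfect matching of $G$ contains $S$; the forcing number $f(G,M)$ is the minimum size of a forcing set. The forcing spectrum $\mathrm{Spec}(G)$ is the set $\{f(G,M): M \text{ a perfect matching of } G\}$; it is called continuous if it is a set of consecutive integers. *)

theory Defs
  imports Main
begin

definition perfect_matching :: "'a set \<Rightarrow> 'a set set \<Rightarrow> 'a set set \<Rightarrow> bool" where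
  "perfect_matching V E M \<longleftrightarrow> M \<subseteq> E \<and> (\<forall>v\<in>V. \<exists>!e. e \<in> M \<and> v \<in> e)"

definition forcing_set :: "'a set \<Rightarrow> 'a set set \<Rightarrow> 'a set set \<Rightarrow> 'a set set \<Rightarrow> bool" where
  "forcing_set V E M S \<longleftrightarrow> S \<subseteq> M \<and>
     (\<forall>M'. perfect_matching V E M' \<and> S \<subseteq> M' \<longrightarrow> M' = M)"

definition forcing_number :: "'a set \<Rightarrow> 'a set set \<Rightarrow> 'a set set \<Rightarrow> nat" where
  "forcing_number V E M = (LEAST k. \<exists>S. forcing_set V E M S \<and> card S = k)"

definition forcing_spectrum :: "'a set \<Rightarrow> 'a set set \<Rightarrow> nat set" where
  "forcing_spectrum V E = {forcing_number V E M | M. perfect_matching V E M}"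

definition continuous_set :: "nat set \<Rightarrow> bool" where
  "continuous_set A \<longleftrightarrow> (\<forall>x\<in>A. \<forall>y\<in>A. \<forall>k. x \<le> k \<and> k \<le> y \<longrightarrow> k \<in> A)"

definition torus_V :: "nat \<Rightarrow> nat \<Rightarrow> (nat \<times> nat) set" where
  "torus_V n m = {0..<2*m} \<times> {0..<2*n+1}"

definition torus_E :: "nat \<Rightarrow> nat \<Rightarrow> (nat \<times> nat) set set" where
  "torus_E n m =
     {{(i,j), ((i+1) mod (2*m), j)} | i j. i < 2*m \<and> j < 2*n+1} \<union>
     {{(i,j), (i, (j+1) mod (2*n+1))} | i j. i < 2*m \<and> j < 2*n+1}"

end

theory Submission
  imports Defs
begin

(* A twist, which replaces the two matching edges on two opposite sides of a unit square by the
   other two sides, changes the forcing number by at most one: a minimum forcing set of the old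
   matching must contain one of the two old edges, and exchanging them for the two new edges
   gives a forcing set of the new matching. So the forcing numbers along a chain of twists take
   every intermediate value, and it suffices to connect every perfect matching of the torus by
   twists to one of the two matchings made of vertical edges with the same phase in every
   column; these two are exchanged by a translation, so their forcing numbers agree.

   Horizontal edges are removed in pairs. In a column, consecutive horizontally matched vertices
   are an odd distance apart; as the number of columns is odd, some two consecutive ones have
   their partners on the same side, and a closest such pair is removed by twists. An
   all-vertical matching is described by the phases of its columns; two adjacent columns of
   equal phase can be flipped together by twists, and these flips reach a constant phase by an
   argument about tokens sliding on a path. *)

section \<open>Twists and forcing numbers\<close>

lemma perfect_matching_iff:
  "perfect_matching V E M \<longleftrightarrow> M \<subseteq> E \<and> (\<forall>v\<in>V. \<exists>e\<in>M. v \<in> e) \<and>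
     (\<forall>v\<in>V. \<forall>e\<in>M. \<forall>e'\<in>M. v \<in> e \<longrightarrow> v \<in> e' \<longrightarrow> e = e')"
  unfolding perfect_matching_def by blast

lemma perfect_matching_unique:
  "perfect_matching V E M \<Longrightarrow> v \<in> V \<Longrightarrow> e \<in> M \<Longrightarrow> e' \<in> M \<Longrightarrow> v \<in> e \<Longrightarrow> v \<in> e' \<Longrightarrow> e = e'"
  unfolding perfect_matching_iff by blast

lemma forcing_number_le_card: "forcing_set V E M S \<Longrightarrow> forcing_number V E M \<le> card S"
  unfolding forcing_number_def by (rule Least_le) blast

lemma rtranclp_intermediate_value:
  fixes f :: "'a \<Rightarrow> nat"
  assumes "r\<^sup>*\<^sup>* x y" and lipschitz: "\<And>u v. r u v \<Longrightarrow> f v \<le> f u + 1"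
    and "f x \<le> k" "k \<le> f y"
  shows "\<exists>z. r\<^sup>*\<^sup>* x z \<and> f z = k"
  using assms(1, 4)
proof (induction rule: rtranclp_induct)
  case base
  then show ?case using \<open>f x \<le> k\<close> by auto
next
  case (step u v)
  show ?case
  proof (cases "k \<le> f u")
    case True
    then show ?thesis using step by auto
  next
    case False
    then have "f v = k" using step.prems lipschitz[OF step.hyps(2)] by linarith
    then show ?thesis using step.hyps by (blast intro: rtranclp.rtrancl_into_rtrancl)
  qed
qed

locale finite_graph =
  fixes V :: "'a set" and E :: "'a set set"
  assumes finite_edges: "finite E"
    and edge_subset: "e \<in> E \<Longrightarrow> e \<subseteq> V"
    and edge_nonempty: "e \<in> E \<Longrightarrow> e \<noteq> {}"
begin

abbreviation "pm \<equiv> perfect_matching V E"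

lemma perfect_matching_edge_meets:
  assumes M: "pm M" and e: "e \<in> E"
  obtains e' v where "e' \<in> M" "v \<in> e" "v \<in> e'" "v \<in> V"
proof -
  obtain v where "v \<in> e" using edge_nonempty[OF e] by blast
  moreover have "v \<in> V" using edge_subset[OF e] \<open>v \<in> e\<close> by blast
  moreover obtain e' where "e' \<in> M" "v \<in> e'" using M \<open>v \<in> V\<close> unfolding perfect_matching_iff by blast
  ultimately show ?thesis using that by blast
qed

lemma forcing_set_self: "pm M \<Longrightarrow> forcing_set V E M M"
  unfolding forcing_set_def
proof (intro conjI allI impI subset_refl)
  fix N assume M: "pm M" and N: "pm N \<and> M \<subseteq> N"
  have "N \<subseteq> M"
  proof
    fix e assume "e \<in> N"
    then have "e \<in> E" using N unfolding perfect_matching_iff by blast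
    then obtain e' v where "e' \<in> M" "v \<in> e" "v \<in> e'" "v \<in> V"
      using perfect_matching_edge_meets[OF M] by blast
    moreover have "e' \<in> N" using N \<open>e' \<in> M\<close> by blast
    ultimately show "e \<in> M" using perfect_matching_unique[OF conjunct1[OF N] \<open>v \<in> V\<close> \<open>e \<in> N\<close>] by blast
  qed
  then show "N = M" using N by blast
qed

lemma forcing_number_attained:
  assumes "pm M"
  obtains S where "forcing_set V E M S" "card S = forcing_number V E M"
proof -
  have "\<exists>S. forcing_set V E M S \<and> card S = (LEAST k. \<exists>S. forcing_set V E M S \<and> card S = k)"
    by (rule LeastI_ex) (use forcing_set_self[OF assms] in blast)
  then show ?thesis using that unfolding forcing_number_def by blast
qed

lemma forcing_set_finite: "pm M \<Longrightarrow> forcing_set V E M S \<Longrightarrow> finite S"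
  unfolding forcing_set_def perfect_matching_iff using finite_edges by (meson finite_subset subset_trans)

lemma perfect_matching_swap:
  assumes N: "pm N" and cd: "c \<in> N" "d \<in> N" and ab: "a \<in> E" "b \<in> E"
    and cover: "a \<union> b = c \<union> d" and disj: "a \<inter> b = {}"
  shows "pm (N - {c, d} \<union> {a, b})"
  unfolding perfect_matching_iff
proof (intro conjI ballI impI)
  show "N - {c, d} \<union> {a, b} \<subseteq> E" using N ab unfolding perfect_matching_iff by blast
next
  fix v assume "v \<in> V"
  then obtain e where "e \<in> N" "v \<in> e" using N unfolding perfect_matching_iff by blast
  then show "\<exists>e\<in>N - {c, d} \<union> {a, b}. v \<in> e" using cover by (cases "v \<in> a \<union> b") auto
next
  fix v e e' assume v: "v \<in> V" and e: "e \<in> N - {c, d} \<union> {a, b}" "e' \<in> N - {c, d} \<union> {a, b}"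
    and ve: "v \<in> e" "v \<in> e'"
  have new: "f \<in> {a, b}" if f: "f \<in> N - {c, d} \<union> {a, b}" "v \<in> f" and "v \<in> a \<union> b" for f
  proof (rule ccontr)
    assume "f \<notin> {a, b}"
    then have "f \<in> N" "f \<noteq> c" "f \<noteq> d" using f by auto
    moreover obtain g where "g \<in> {c, d}" "v \<in> g" using \<open>v \<in> a \<union> b\<close> cover by blast
    ultimately show False using perfect_matching_unique[OF N v, of f g] cd f(2) by blast
  qed
  show "e = e'"
  proof (cases "v \<in> a \<union> b")
    case True
    then show ?thesis using new[OF e(1) ve(1)] new[OF e(2) ve(2)] ve disj by blast
  next
    case False
    then show ?thesis using e ve perfect_matching_unique[OF N v] by blast
  qed
qed

lemma not_in_matching_if_covered:
  assumes M: "pm M" and ab: "a \<in> M" "b \<in> M" and x: "x \<in> E" "x \<subseteq> a \<union> b" "x \<noteq> a" "x \<noteq> b"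
  shows "x \<notin> M"
proof
  assume "x \<in> M"
  obtain v where "v \<in> x" using edge_nonempty[OF x(1)] by blast
  moreover have "v \<in> V" using edge_subset[OF x(1)] \<open>v \<in> x\<close> by blast
  moreover have "v \<in> a \<or> v \<in> b" using x(2) \<open>v \<in> x\<close> by blast
  ultimately show False
    using perfect_matching_unique[OF M \<open>v \<in> V\<close> \<open>x \<in> M\<close>] ab x(3, 4) by metis
qed

text \<open>In the torus, a twist re-matches the four corners of a unit square.\<close>

definition twist :: "'a set set \<Rightarrow> 'a set set \<Rightarrow> bool" where
  "twist M M' \<longleftrightarrow> pm M \<and> (\<exists>a b c d. a \<in> M \<and> b \<in> M \<and> c \<in> E \<and> d \<in> E \<and>
     a \<union> b = c \<union> d \<and> a \<inter> b = {} \<and> c \<inter> d = {} \<and> {a, b} \<inter> {c, d} = {} \<and>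
     M' = M - {a, b} \<union> {c, d})"

context
  fixes M :: "'a set set" and a b c d :: "'a set"
  assumes M: "pm M" and ab: "a \<in> M" "b \<in> M" and cd: "c \<in> E" "d \<in> E"
    and cover: "a \<union> b = c \<union> d" and disjoint: "a \<inter> b = {}" "c \<inter> d = {}" "{a, b} \<inter> {c, d} = {}"
begin

lemma twistI: "twist M (M - {a, b} \<union> {c, d})"
  unfolding twist_def using M ab cd cover disjoint by blast

lemma twist_new_edges: "c \<notin> M" "d \<notin> M"
  using not_in_matching_if_covered[OF M ab] cd cover disjoint(3) by blast+

lemma twist_old_edges: "a \<in> E" "b \<in> E"
  using M ab unfolding perfect_matching_iff by blast+

lemma forcing_set_twist:
  assumes S: "forcing_set V E M S"
  shows "forcing_set V E (M - {a, b} \<union> {c, d}) (S - {a, b} \<union> {c, d})"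
  unfolding forcing_set_def
proof (intro conjI allI impI)
  have SM: "S \<subseteq> M" using S unfolding forcing_set_def by blast
  then show "S - {a, b} \<union> {c, d} \<subseteq> M - {a, b} \<union> {c, d}" by blast
  fix N assume N: "pm N \<and> S - {a, b} \<union> {c, d} \<subseteq> N"
  then have cdN: "c \<in> N" "d \<in> N" by auto
  have "S \<subseteq> N - {c, d} \<union> {a, b}" using N SM twist_new_edges by blast
  then have "N - {c, d} \<union> {a, b} = M"
    using S perfect_matching_swap[OF conjunct1[OF N] cdN twist_old_edges cover disjoint(1)]
    unfolding forcing_set_def by blast
  moreover have "a \<notin> N" "b \<notin> N"
    using not_in_matching_if_covered[OF conjunct1[OF N] cdN] twist_old_edges cover disjoint(3) by blast+
  ultimately show "N = M - {a, b} \<union> {c, d}" using cdN by blast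
qed

lemma forcing_set_meets_twist:
  assumes S: "forcing_set V E M S" shows "a \<in> S \<or> b \<in> S"
proof (rule ccontr)
  assume "\<not> (a \<in> S \<or> b \<in> S)"
  then have "S \<subseteq> M - {a, b} \<union> {c, d}" using S unfolding forcing_set_def by blast
  moreover have "pm (M - {a, b} \<union> {c, d})"
    using perfect_matching_swap[OF M ab cd cover[symmetric] disjoint(2)] .
  ultimately have "M - {a, b} \<union> {c, d} = M" using S unfolding forcing_set_def by blast
  then show False using ab disjoint(3) by blast
qed

end

lemma twist_perfect_matching: "twist M M' \<Longrightarrow> pm M'"
  unfolding twist_def by (metis perfect_matching_swap)

lemma twist_sym: "twist M M' \<Longrightarrow> twist M' M"
proof -
  assume "twist M M'"
  then obtain a b c d where M: "pm M" and ab: "a \<in> M" "b \<in> M" and cd: "c \<in> E" "d \<in> E"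
    and sq: "a \<union> b = c \<union> d" "a \<inter> b = {}" "c \<inter> d = {}" "{a, b} \<inter> {c, d} = {}"
    and M': "M' = M - {a, b} \<union> {c, d}"
    unfolding twist_def by blast
  have "M = M' - {c, d} \<union> {a, b}" using M' ab twist_new_edges[OF M ab cd sq] by blast
  moreover have "c \<in> M'" "d \<in> M'" "{c, d} \<inter> {a, b} = {}" using M' sq(4) by blast+
  ultimately show "twist M' M"
    using twistI[of M' c d a b] twist_perfect_matching[OF \<open>twist M M'\<close>] sq(1-3)
      twist_old_edges[OF M ab cd sq] by (simp add: Int_commute)
qed

lemma forcing_number_twist_le:
  assumes "twist M M'"
  shows "forcing_number V E M' \<le> forcing_number V E M + 1"
proof -
  obtain a b c d where M: "pm M" and twist: "a \<in> M" "b \<in> M" "c \<in> E" "d \<in> E"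
    "a \<union> b = c \<union> d" "a \<inter> b = {}" "c \<inter> d = {}" "{a, b} \<inter> {c, d} = {}"
    and M': "M' = M - {a, b} \<union> {c, d}"
    using assms unfolding twist_def by blast
  obtain S where S: "forcing_set V E M S" "card S = forcing_number V E M"
    using forcing_number_attained[OF M] .
  have "card (S - {a, b}) < card S"
    using forcing_set_finite[OF M S(1)] forcing_set_meets_twist[OF M twist S(1)]
    by (intro psubset_card_mono) auto
  moreover have "forcing_number V E M' \<le> card (S - {a, b} \<union> {c, d})"
    unfolding M' by (rule forcing_number_le_card[OF forcing_set_twist[OF M twist S(1)]])
  moreover have "card (S - {a, b} \<union> {c, d}) \<le> card (S - {a, b}) + card {c, d}"
    by (rule card_Un_le)
  moreover have "card {c, d} \<le> 2" by (simp add: card_insert_if)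
  ultimately show ?thesis using S(2) by linarith
qed

definition inverse_automorphisms :: "('a \<Rightarrow> 'a) \<Rightarrow> ('a \<Rightarrow> 'a) \<Rightarrow> bool" where
  "inverse_automorphisms \<sigma> \<tau> \<longleftrightarrow>
     (\<forall>v\<in>V. \<sigma> v \<in> V \<and> \<tau> v \<in> V \<and> \<tau> (\<sigma> v) = v \<and> \<sigma> (\<tau> v) = v) \<and> (\<forall>e\<in>E. \<sigma> ` e \<in> E \<and> \<tau> ` e \<in> E)"

lemma inverse_automorphisms_sym: "inverse_automorphisms \<sigma> \<tau> \<Longrightarrow> inverse_automorphisms \<tau> \<sigma>"
  unfolding inverse_automorphisms_def by blast

lemma inverse_automorphisms_image_image:
  assumes "inverse_automorphisms \<sigma> \<tau>" "X \<subseteq> E"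
  shows "(`) \<tau> ` (`) \<sigma> ` X = X"
proof -
  have "\<tau> ` \<sigma> ` e = e" if "e \<in> E" for e
    using assms(1) edge_subset[OF that] unfolding inverse_automorphisms_def image_image
    by (simp add: subset_iff cong: image_cong)
  then show ?thesis using assms(2) unfolding image_image by (simp add: subset_iff cong: image_cong)
qed

lemma perfect_matching_image:
  assumes aut: "inverse_automorphisms \<sigma> \<tau>" and M: "pm M"
  shows "pm ((`) \<sigma> ` M)"
  unfolding perfect_matching_iff
proof (intro conjI ballI impI)
  show "(`) \<sigma> ` M \<subseteq> E" using M aut unfolding perfect_matching_iff inverse_automorphisms_def by blast
next
  fix v assume "v \<in> V"
  then obtain e where "e \<in> M" "\<tau> v \<in> e"
    using M aut unfolding perfect_matching_iff inverse_automorphisms_def by blast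
  moreover have "v = \<sigma> (\<tau> v)" using aut \<open>v \<in> V\<close> unfolding inverse_automorphisms_def by simp
  ultimately show "\<exists>e\<in>(`) \<sigma> ` M. v \<in> e" by blast
next
  fix v e e' assume "v \<in> V" "e \<in> (`) \<sigma> ` M" "e' \<in> (`) \<sigma> ` M" "v \<in> e" "v \<in> e'"
  then obtain f f' u u' where f: "f \<in> M" "f' \<in> M" "e = \<sigma> ` f" "e' = \<sigma> ` f'" "u \<in> f" "u' \<in> f'"
    "v = \<sigma> u" "v = \<sigma> u'" by blast
  have "f \<subseteq> V" "f' \<subseteq> V" using f M edge_subset unfolding perfect_matching_iff by blast+
  then have "\<tau> (\<sigma> u) = u" "\<tau> (\<sigma> u') = u'" using aut f(5, 6) unfolding inverse_automorphisms_def by blast+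
  then have "u = u'" using f(7, 8) by metis
  then show "e = e'" using perfect_matching_unique[OF M _ f(1, 2)] f \<open>f \<subseteq> V\<close> by blast
qed

lemma forcing_number_image_le:
  assumes aut: "inverse_automorphisms \<sigma> \<tau>" and M: "pm M"
  shows "forcing_number V E ((`) \<sigma> ` M) \<le> forcing_number V E M"
proof -
  obtain S where S: "forcing_set V E M S" "card S = forcing_number V E M"
    using forcing_number_attained[OF M] .
  have SM: "S \<subseteq> M" and ME: "M \<subseteq> E" using S(1) M unfolding forcing_set_def perfect_matching_iff by blast+
  have "forcing_set V E ((`) \<sigma> ` M) ((`) \<sigma> ` S)"
    unfolding forcing_set_def
  proof (intro conjI allI impI)
    show "(`) \<sigma> ` S \<subseteq> (`) \<sigma> ` M" using SM by blast
    fix N assume N: "pm N \<and> (`) \<sigma> ` S \<subseteq> N"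
    have NE: "N \<subseteq> E" using N unfolding perfect_matching_iff by blast
    have aut': "inverse_automorphisms \<tau> \<sigma>" using inverse_automorphisms_sym[OF aut] .
    have "S = (`) \<tau> ` (`) \<sigma> ` S"
      using inverse_automorphisms_image_image[OF aut, of S] SM ME by simp
    also have "\<dots> \<subseteq> (`) \<tau> ` N" using N by (intro image_mono) simp
    finally have "S \<subseteq> (`) \<tau> ` N" .
    then have "(`) \<tau> ` N = M"
      using S(1) perfect_matching_image[OF aut' conjunct1[OF N]] unfolding forcing_set_def by blast
    then show "N = (`) \<sigma> ` M" using inverse_automorphisms_image_image[OF aut' NE] by simp
  qed
  then have "forcing_number V E ((`) \<sigma> ` M) \<le> card ((`) \<sigma> ` S)" by (rule forcing_number_le_card)
  also have "\<dots> \<le> card S" by (rule card_image_le[OF forcing_set_finite[OF M S(1)]])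
  finally show ?thesis using S(2) by simp
qed

lemma twist_rtranclp_perfect_matching: "twist\<^sup>*\<^sup>* M M' \<Longrightarrow> pm M \<Longrightarrow> pm M'"
  by (induction rule: rtranclp_induct) (auto intro: twist_perfect_matching)

lemma twist_rtranclp_sym: "twist\<^sup>*\<^sup>* M M' \<Longrightarrow> twist\<^sup>*\<^sup>* M' M"
  using symp_rtranclp[of twist] twist_sym by (simp add: symp_def)

theorem continuous_forcing_spectrum_if_twist_connected:
  assumes connected: "\<And>M. pm M \<Longrightarrow> \<exists>M0. twist\<^sup>*\<^sup>* M M0 \<and> forcing_number V E M0 = f0"
  shows "continuous_set (forcing_spectrum V E)"
  unfolding continuous_set_def
proof (intro ballI allI impI)
  fix x y k assume "x \<in> forcing_spectrum V E" "y \<in> forcing_spectrum V E" and k: "x \<le> k \<and> k \<le> y"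
  then obtain M1 M2 where M: "pm M1" "pm M2" "forcing_number V E M1 = x" "forcing_number V E M2 = y"
    unfolding forcing_spectrum_def by blast
  have "\<exists>M'. pm M' \<and> forcing_number V E M' = k"
    if "twist\<^sup>*\<^sup>* M M0" "pm M" "forcing_number V E M \<le> k" "k \<le> forcing_number V E M0" for M M0
    using rtranclp_intermediate_value[OF that(1) forcing_number_twist_le that(3, 4)]
      twist_rtranclp_perfect_matching that(2) by blast
  moreover obtain A where "twist\<^sup>*\<^sup>* M1 A" "forcing_number V E A = f0"
    using connected[OF M(1)] by blast
  moreover obtain B where "twist\<^sup>*\<^sup>* M2 B" "forcing_number V E B = f0"
    using connected[OF M(2)] by blast
  ultimately have "\<exists>M'. pm M' \<and> forcing_number V E M' = k"
    using k M twist_rtranclp_sym twist_rtranclp_perfect_matching by (metis nle_le)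
  then show "k \<in> forcing_spectrum V E" unfolding forcing_spectrum_def by blast
qed

end

section \<open>Tokens on a path\<close>

text \<open>\<open>B\<close> is the set of occupied sites of the path \<open>0, \<dots>, N - 1\<close>; tokens hop to free
  neighbouring sites, and the two end sites are emptied or filled together.\<close>

definition token_move :: "nat \<Rightarrow> nat set \<Rightarrow> nat set \<Rightarrow> bool" where
  "token_move N B B' \<longleftrightarrow>
     (\<exists>j. Suc j < N \<and> j \<in> B \<and> Suc j \<notin> B \<and> B' = insert (Suc j) (B - {j})) \<or>
     (\<exists>j. Suc j < N \<and> Suc j \<in> B \<and> j \<notin> B \<and> B' = insert j (B - {Suc j})) \<or>
     (0 \<in> B \<and> N - 1 \<in> B \<and> B' = B - {0, N - 1}) \<or>
     (0 \<notin> B \<and> N - 1 \<notin> B \<and> B' = insert 0 (insert (N - 1) B))"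

lemma token_move_sym: "token_move N B B' \<Longrightarrow> 0 < N \<Longrightarrow> token_move N B' B"
  unfolding token_move_def by (elim disjE exE conjE) (auto simp: insert_absorb)

lemma token_moves_sym: "(token_move N)\<^sup>*\<^sup>* B B' \<Longrightarrow> 0 < N \<Longrightarrow> (token_move N)\<^sup>*\<^sup>* B' B"
  by (induction rule: rtranclp_induct) (auto intro: converse_rtranclp_into_rtranclp token_move_sym)

lemma token_hop_right:
  assumes "x < y" "y < N" "x \<in> B" "y \<notin> B"
  shows "(token_move N)\<^sup>*\<^sup>* B (insert y (B - {x}))"
  using assms
proof (induction y arbitrary: B)
  case (Suc z)
  show ?case
  proof (cases "z = x")
    case True
    then have "token_move N B (insert (Suc z) (B - {x}))" using Suc.prems unfolding token_move_def by blast
    then show ?thesis by simp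
  next
    case False
    then have "x < z" using Suc.prems by simp
    show ?thesis
    proof (cases "z \<in> B")
      case True
      let ?B = "insert (Suc z) (B - {z})"
      have "token_move N B ?B" using True Suc.prems unfolding token_move_def by blast
      moreover have "(token_move N)\<^sup>*\<^sup>* ?B (insert z (?B - {x}))"
        using Suc.IH[of ?B] \<open>x < z\<close> Suc.prems by auto
      moreover have "insert z (?B - {x}) = insert (Suc z) (B - {x})" using True \<open>x < z\<close> by auto
      ultimately show ?thesis by (metis converse_rtranclp_into_rtranclp)
    next
      case False
      let ?B = "insert z (B - {x})"
      have "(token_move N)\<^sup>*\<^sup>* B ?B" using Suc.IH[of B] \<open>x < z\<close> Suc.prems False by auto
      moreover have "token_move N ?B (insert (Suc z) (?B - {z}))"
        using Suc.prems \<open>x < z\<close> unfolding token_move_def by auto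
      moreover have "insert (Suc z) (?B - {z}) = insert (Suc z) (B - {x})" using False by auto
      ultimately show ?thesis by (metis rtranclp.rtrancl_into_rtrancl)
    qed
  qed
qed simp

lemma token_hop:
  assumes "x < N" "y < N" "x \<in> B" "y \<notin> B"
  shows "(token_move N)\<^sup>*\<^sup>* B (insert y (B - {x}))"
proof (cases "x < y")
  case False
  then have "y < x" using assms by (metis linorder_neqE_nat)
  then have "(token_move N)\<^sup>*\<^sup>* (insert y (B - {x})) (insert x (insert y (B - {x}) - {y}))"
    using token_hop_right[of y x N "insert y (B - {x})"] assms by blast
  moreover have "insert x (insert y (B - {x}) - {y}) = B" using assms by auto
  ultimately show ?thesis using token_moves_sym assms by fastforce
qed (use token_hop_right assms in blast)

lemma token_moves_same_card:
  assumes "B \<subseteq> {..<N}" "B' \<subseteq> {..<N}" "card B = card B'"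
  shows "(token_move N)\<^sup>*\<^sup>* B B'"
  using assms
proof (induction "card (B - B')" arbitrary: B)
  case 0
  have "finite B'" "finite B" using "0.prems" finite_subset by blast+
  then have "B \<subseteq> B'" using "0.hyps" by simp
  then have "B = B'" using card_subset_eq[OF \<open>finite B'\<close>] "0.prems"(3) by blast
  then show ?case by simp
next
  case (Suc k)
  have fin: "finite B" "finite B'" using Suc.prems finite_subset by blast+
  obtain x where x: "x \<in> B" "x \<notin> B'"
    using Suc.hyps(2) by (metis Diff_iff card.empty ex_in_conv nat.distinct(1))
  have "B' - B \<noteq> {}"
  proof
    assume "B' - B = {}"
    then have "B' \<subset> B" using x by blast
    then show False using psubset_card_mono[OF fin(1), of B'] Suc.prems(3) by simp
  qed
  then obtain y where y: "y \<in> B'" "y \<notin> B" by blast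
  let ?B = "insert y (B - {x})"
  have "(token_move N)\<^sup>*\<^sup>* B ?B" using token_hop[of x N y B] x y Suc.prems by blast
  moreover have "(token_move N)\<^sup>*\<^sup>* ?B B'"
  proof (rule Suc.hyps(1))
    have "?B - B' = (B - B') - {x}" using x y by auto
    then show "k = card (?B - B')" using Suc.hyps(2) x by simp
    show "?B \<subseteq> {..<N}" using Suc.prems y by blast
    have "card B' = Suc (card (B - {x}))" using Suc.prems(3) card_Suc_Diff1[OF fin(1) x(1)] by simp
    then show "card ?B = card B'" using y fin by simp
  qed (use Suc.prems in blast)
  ultimately show ?case by simp
qed

lemma token_moves_remove_pair:
  assumes "B \<subseteq> {..<N}" "2 \<le> card B"
  shows "\<exists>B'. B' \<subseteq> {..<N} \<and> card B' + 2 = card B \<and> (token_move N)\<^sup>*\<^sup>* B B'"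
proof -
  have "card B \<le> N" using card_mono[OF _ assms(1)] by simp
  define E where "E = insert 0 {N - card B + 1..<N}"
  have E: "E \<subseteq> {..<N}" "card E = card B" "0 \<in> E" "N - 1 \<in> E"
    unfolding E_def using assms(2) \<open>card B \<le> N\<close> by auto
  then have "token_move N E (E - {0, N - 1})" unfolding token_move_def by blast
  moreover have "card (E - {0, N - 1}) + 2 = card B"
    using E assms(2) by (simp add: card_Diff_subset E_def)
  ultimately show ?thesis
    using token_moves_same_card[OF assms(1) E(1)] E(2) E(1)
    by (metis (no_types, lifting) Diff_subset order_trans rtranclp.rtrancl_into_rtrancl)
qed

lemma token_moves_add_pair:
  assumes "B \<subseteq> {..<N}" "card B + 2 \<le> N"
  shows "\<exists>B'. B' \<subseteq> {..<N} \<and> card B' = card B + 2 \<and> (token_move N)\<^sup>*\<^sup>* B B'"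
proof -
  define E where "E = {1..card B}"
  have E: "E \<subseteq> {..<N}" "card E = card B" "0 \<notin> E" "N - 1 \<notin> E"
    unfolding E_def using assms(2) by auto
  then have "token_move N E (insert 0 (insert (N - 1) E))" unfolding token_move_def by blast
  moreover have "card (insert 0 (insert (N - 1) E)) = card B + 2"
    using E finite_subset[OF E(1)] assms(2) by simp
  moreover have "insert 0 (insert (N - 1) E) \<subseteq> {..<N}" using E(1) assms(2) by auto
  ultimately show ?thesis
    using token_moves_same_card[OF assms(1) E(1)] E(2) by (metis rtranclp.rtrancl_into_rtrancl)
qed

theorem token_moves_if_even_card_sum:
  assumes "B \<subseteq> {..<N}" "B' \<subseteq> {..<N}" "even (card B + card B')"
  shows "(token_move N)\<^sup>*\<^sup>* B B'"
  using assms
proof (induction "card B + card B' - 2 * min (card B) (card B')" arbitrary: B rule: less_induct)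
  case less
  have "card B' \<le> N" using card_mono[OF _ less.prems(2)] by simp
  have "card B = card B' \<or> card B' + 2 \<le> card B \<or> card B + 2 \<le> card B'"
    using less.prems(3) by presburger
  then consider "card B = card B'" | "card B' + 2 \<le> card B" | "card B + 2 \<le> card B'"
    by blast
  then show ?case
  proof cases
    case 1
    then show ?thesis using token_moves_same_card less.prems by blast
  next
    case 2
    then obtain B1 where "B1 \<subseteq> {..<N}" "card B1 + 2 = card B" "(token_move N)\<^sup>*\<^sup>* B B1"
      using token_moves_remove_pair[OF less.prems(1)] by auto
    moreover have "(token_move N)\<^sup>*\<^sup>* B1 B'"
    proof (rule less.hyps)
      show "card B1 + card B' - 2 * min (card B1) (card B') < card B + card B' - 2 * min (card B) (card B')"
        using calculation 2 by (simp add: min_def) linarith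
      show "even (card B1 + card B')" using calculation(2) less.prems(3) by presburger
    qed (use calculation less.prems in blast)+
    ultimately show ?thesis by simp
  next
    case 3
    then obtain B1 where "B1 \<subseteq> {..<N}" "card B1 = card B + 2" "(token_move N)\<^sup>*\<^sup>* B B1"
      using token_moves_add_pair[OF less.prems(1)] \<open>card B' \<le> N\<close> by auto
    moreover have "(token_move N)\<^sup>*\<^sup>* B1 B'"
    proof (rule less.hyps)
      show "card B1 + card B' - 2 * min (card B1) (card B') < card B + card B' - 2 * min (card B) (card B')"
        using calculation 3 by (simp add: min_def)
      show "even (card B1 + card B')" using calculation(2) less.prems(3) by presburger
    qed (use calculation less.prems in blast)+
    ultimately show ?thesis by simp
  qed
qed

section \<open>Perfect matchings of the torus as direction maps\<close>

datatype dir = North | South | West | East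

fun opposite :: "dir \<Rightarrow> dir" where
  "opposite North = South" | "opposite South = North" | "opposite West = East" | "opposite East = West"

lemma add_mod_inj:
  fixes q :: nat
  assumes "k < q" "l < q" "(a + k) mod q = (a + l) mod q"
  shows "k = l"
  using assms
proof (induction k l rule: linorder_wlog)
  case (le k l)
  then have "q dvd l - k" using mod_eq_dvd_iff_nat[of "a + k" "a + l" q] by simp
  then show ?case using le by (metis diff_less_mono dvd_imp_le le_antisym less_imp_diff_less not_less
        zero_less_diff)
qed metis

text \<open>Vertex \<open>(i, j)\<close> is \<open>(u\<^sub>i, v\<^sub>j)\<close>: \<open>R = 2m\<close> rows and \<open>C = 2n + 1\<close> columns, with
  \<open>north\<close> and \<open>east\<close> the steps \<open>i + 1\<close> and \<open>j + 1\<close>.\<close>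

locale torus =
  fixes R C :: nat
  assumes even_R: "even R" and R_ge_4: "4 \<le> R" and odd_C: "odd C" and C_ge_3: "3 \<le> C"
begin

definition rowshift :: "nat \<Rightarrow> nat \<Rightarrow> nat" where "rowshift i k = (i + k) mod R"
definition colshift :: "nat \<Rightarrow> nat \<Rightarrow> nat" where "colshift j k = (j + k) mod C"
definition north :: "nat \<Rightarrow> nat" where "north i = rowshift i 1"
definition south :: "nat \<Rightarrow> nat" where "south i = rowshift i (R - 1)"
definition east :: "nat \<Rightarrow> nat" where "east j = colshift j 1"
definition west :: "nat \<Rightarrow> nat" where "west j = colshift j (C - 1)"

definition V :: "(nat \<times> nat) set" where "V = {0..<R} \<times> {0..<C}"

definition E :: "(nat \<times> nat) set set" where
  "E = {{(i, j), (north i, j)} | i j. i < R \<and> j < C} \<union> {{(i, j), (i, east j)} | i j. i < R \<and> j < C}"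

lemma V_iff [simp]: "(i, j) \<in> V \<longleftrightarrow> i < R \<and> j < C"
  by (simp add: V_def)

lemma rowshift_lt [simp]: "rowshift i k < R" unfolding rowshift_def using R_ge_4 by simp
lemma colshift_lt [simp]: "colshift j k < C" unfolding colshift_def using C_ge_3 by simp
lemma north_lt [simp]: "north i < R" unfolding north_def by simp
lemma south_lt [simp]: "south i < R" unfolding south_def by simp
lemma east_lt [simp]: "east j < C" unfolding east_def by simp
lemma west_lt [simp]: "west j < C" unfolding west_def by simp

lemma rowshift_rowshift: "rowshift (rowshift i k) l = rowshift i (k + l)"
  unfolding rowshift_def by (simp add: mod_add_left_eq add.assoc)
lemma colshift_colshift: "colshift (colshift j k) l = colshift j (k + l)"
  unfolding colshift_def by (simp add: mod_add_left_eq add.assoc)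
lemma rowshift_0 [simp]: "i < R \<Longrightarrow> rowshift i 0 = i" unfolding rowshift_def by simp
lemma colshift_0 [simp]: "j < C \<Longrightarrow> colshift j 0 = j" unfolding colshift_def by simp
lemma rowshift_R: "i < R \<Longrightarrow> rowshift i R = i" unfolding rowshift_def by simp
lemma colshift_C: "j < C \<Longrightarrow> colshift j C = j" unfolding colshift_def by simp
lemma rowshift_add_R: "rowshift i (k + R) = rowshift i k"
  unfolding rowshift_def by (metis add.assoc mod_add_self2)
lemma rowshift_inj: "k < R \<Longrightarrow> l < R \<Longrightarrow> rowshift i k = rowshift i l \<Longrightarrow> k = l"
  unfolding rowshift_def by (rule add_mod_inj)
lemma colshift_inj: "k < C \<Longrightarrow> l < C \<Longrightarrow> colshift j k = colshift j l \<Longrightarrow> k = l"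
  unfolding colshift_def by (rule add_mod_inj)
lemma rowshift_diff: "k \<le> l \<Longrightarrow> rowshift (rowshift i k) (l - k) = rowshift i l"
  by (simp add: rowshift_rowshift)

lemma even_rowshift: "even (rowshift i k) \<longleftrightarrow> even (i + k)"
proof -
  have "(i + k) mod R mod 2 = (i + k) mod 2" using even_R by (simp add: mod_mod_cancel)
  then show ?thesis unfolding rowshift_def even_iff_mod_2_eq_zero by simp
qed

lemma east_colshift: "east (colshift j k) = colshift j (Suc k)"
  unfolding east_def by (simp add: colshift_colshift)
lemma north_north: "north (north i) = rowshift i 2"
  unfolding north_def rowshift_rowshift by (simp add: numeral_2_eq_2)

lemma north_south [simp]: "i < R \<Longrightarrow> north (south i) = i"
  unfolding north_def south_def using rowshift_R R_ge_4 rowshift_rowshift[of i "R - 1" 1] by simp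
lemma south_north [simp]: "i < R \<Longrightarrow> south (north i) = i"
  unfolding north_def south_def using rowshift_R R_ge_4 rowshift_rowshift[of i 1 "R - 1"] by simp
lemma east_west [simp]: "j < C \<Longrightarrow> east (west j) = j"
  unfolding east_def west_def using colshift_C C_ge_3 colshift_colshift[of j "C - 1" 1] by simp
lemma west_east [simp]: "j < C \<Longrightarrow> west (east j) = j"
  unfolding east_def west_def using colshift_C C_ge_3 colshift_colshift[of j 1 "C - 1"] by simp

lemma north_neq [simp]: "i < R \<Longrightarrow> north i \<noteq> i"
  using rowshift_inj[of 1 0 i] R_ge_4 unfolding north_def by auto
lemma south_neq [simp]: "i < R \<Longrightarrow> south i \<noteq> i"
  using rowshift_inj[of "R - 1" 0 i] R_ge_4 unfolding south_def by auto
lemma north_neq_south [simp]: "north i \<noteq> south i"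
  using rowshift_inj[of 1 "R - 1" i] R_ge_4 unfolding north_def south_def by auto
lemma east_neq [simp]: "j < C \<Longrightarrow> east j \<noteq> j"
  using colshift_inj[of 1 0 j] C_ge_3 unfolding east_def by auto
lemma west_neq [simp]: "j < C \<Longrightarrow> west j \<noteq> j"
  using colshift_inj[of "C - 1" 0 j] C_ge_3 unfolding west_def by auto
lemma east_neq_west [simp]: "east j \<noteq> west j"
  using colshift_inj[of 1 "C - 1" j] C_ge_3 unfolding east_def west_def by auto

lemma north_north_neq:
  assumes "i < R" shows "north (north i) \<noteq> i" "north (north i) \<noteq> north i"
  using rowshift_inj[of 2 0 i] rowshift_inj[of 2 1 i] R_ge_4 assms
  unfolding north_north by (auto simp: north_def)

lemma even_north: "even (north i) \<longleftrightarrow> odd i"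
  unfolding north_def using even_rowshift[of i 1] by simp
lemma even_south: "even (south i) \<longleftrightarrow> odd i"
  unfolding south_def using even_rowshift[of i "R - 1"] even_R R_ge_4 by simp

definition row_offset :: "nat \<Rightarrow> nat \<Rightarrow> nat" where "row_offset p i = (i + R - p) mod R"

lemma row_offset_lt [simp]: "row_offset p i < R"
  unfolding row_offset_def using R_ge_4 by simp

lemma rowshift_row_offset: "p < R \<Longrightarrow> i < R \<Longrightarrow> rowshift p (row_offset p i) = i"
  unfolding row_offset_def rowshift_def by (simp add: mod_add_right_eq)

lemma row_offset_rowshift: "p < R \<Longrightarrow> k < R \<Longrightarrow> row_offset p (rowshift p k) = k"
  using rowshift_inj[of "row_offset p (rowshift p k)" k p] rowshift_row_offset[of p "rowshift p k"] by simp

fun nbr :: "nat \<times> nat \<Rightarrow> dir \<Rightarrow> nat \<times> nat" where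
  "nbr (i, j) North = (north i, j)"
| "nbr (i, j) South = (south i, j)"
| "nbr (i, j) West = (i, west j)"
| "nbr (i, j) East = (i, east j)"

lemma nbr_in_V: "v \<in> V \<Longrightarrow> nbr v d \<in> V"
  by (cases v; cases d) auto
lemma nbr_nbr_opposite [simp]: "v \<in> V \<Longrightarrow> nbr (nbr v d) (opposite d) = v"
  by (cases v; cases d) auto
lemma nbr_inj: "v \<in> V \<Longrightarrow> nbr v d = nbr v d' \<Longrightarrow> d = d'"
  by (cases v; cases d; cases d') (auto dest: sym)
lemma nbr_neq: "v \<in> V \<Longrightarrow> nbr v d \<noteq> v"
  by (cases v; cases d) auto

lemma edge_nbr: "v \<in> V \<Longrightarrow> {v, nbr v d} \<in> E"
proof (cases v)
  case (Pair i j)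
  assume "v \<in> V"
  then have ij: "i < R" "j < C" using Pair by auto
  have north: "{(i', j'), (north i', j')} \<in> E" and east: "{(i', j'), (i', east j')} \<in> E"
    if "i' < R" "j' < C" for i' j'
    using that unfolding E_def by blast+
  show ?thesis
  proof (cases d)
    case South
    then show ?thesis using north[of "south i" j] ij Pair by (simp add: insert_commute)
  next
    case West
    then show ?thesis using east[of i "west j"] ij Pair by (simp add: insert_commute)
  qed (use north east ij Pair in simp_all)
qed

lemma edge_cases:
  assumes "e \<in> E" obtains v d where "v \<in> V" "e = {v, nbr v d}"
proof -
  consider i j where "i < R" "j < C" "e = {(i, j), nbr (i, j) North}"
    | i j where "i < R" "j < C" "e = {(i, j), nbr (i, j) East}"
    using assms unfolding E_def by auto
  then show ?thesis using that by cases (metis V_iff)+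
qed

lemma edge_from_endpoint:
  assumes "e \<in> E" "w \<in> e" obtains d where "e = {w, nbr w d}"
proof -
  obtain v d where v: "v \<in> V" "e = {v, nbr v d}" using edge_cases[OF assms(1)] .
  then have "e = {w, nbr w d} \<or> e = {w, nbr w (opposite d)}" using assms(2) by auto
  then show ?thesis using that by blast
qed

lemma edge_subset_V: "e \<in> E \<Longrightarrow> e \<subseteq> V"
  by (metis edge_cases empty_subsetI insert_subset nbr_in_V)

lemma finite_graph: "finite_graph V E"
proof
  show "finite E"
    using edge_subset_V finite_subset[of E "Pow V"] by (auto simp: V_def)
qed (use edge_subset_V edge_cases in blast)+

end

sublocale torus \<subseteq> finite_graph "torus.V R C" "torus.E R C"
  by (rule torus.finite_graph[OF torus_axioms])

context torus
begin

text \<open>A perfect matching is encoded by the map \<open>\<delta>\<close> sending each vertex to the direction of its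
  partner. Off the torus \<open>\<delta>\<close> is fixed to \<open>North\<close>, which makes the encoding unique.\<close>

definition consistent :: "(nat \<times> nat \<Rightarrow> dir) \<Rightarrow> bool" where
  "consistent \<delta> \<longleftrightarrow> (\<forall>v\<in>V. \<delta> (nbr v (\<delta> v)) = opposite (\<delta> v)) \<and> (\<forall>v. v \<notin> V \<longrightarrow> \<delta> v = North)"

definition matching_of :: "(nat \<times> nat \<Rightarrow> dir) \<Rightarrow> (nat \<times> nat) set set" where
  "matching_of \<delta> = {{v, nbr v (\<delta> v)} | v. v \<in> V}"

lemma consistentD:
  "consistent \<delta> \<Longrightarrow> v \<in> V \<Longrightarrow> \<delta> (nbr v (\<delta> v)) = opposite (\<delta> v)"
  "consistent \<delta> \<Longrightarrow> v \<notin> V \<Longrightarrow> \<delta> v = North"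
  unfolding consistent_def by blast+

lemma consistent_partner: "consistent \<delta> \<Longrightarrow> w \<in> V \<Longrightarrow> v = nbr w (\<delta> w) \<Longrightarrow> nbr v (\<delta> v) = w"
  using consistentD(1) by (metis nbr_nbr_opposite)

lemma matching_ofI: "v \<in> V \<Longrightarrow> {v, nbr v (\<delta> v)} \<in> matching_of \<delta>"
  unfolding matching_of_def by blast

lemma matching_of_cong: "(\<And>v. v \<in> V \<Longrightarrow> \<delta> v = \<delta>' v) \<Longrightarrow> matching_of \<delta> = matching_of \<delta>'"
  unfolding matching_of_def by (metis (no_types, lifting))

lemma consistent_perfect_matching:
  assumes "consistent \<delta>" shows "pm (matching_of \<delta>)"
  unfolding perfect_matching_iff
proof (intro conjI ballI impI)
  show "matching_of \<delta> \<subseteq> E" unfolding matching_of_def using edge_nbr by blast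
  fix v assume v: "v \<in> V"
  show "\<exists>e\<in>matching_of \<delta>. v \<in> e" using matching_ofI[OF v] by blast
  have unique: "f = {v, nbr v (\<delta> v)}" if f: "f \<in> matching_of \<delta>" "v \<in> f" for f
  proof -
    obtain w where w: "w \<in> V" "f = {w, nbr w (\<delta> w)}" using f(1) unfolding matching_of_def by blast
    then have "v = w \<or> v = nbr w (\<delta> w)" using f(2) by blast
    then show ?thesis using w consistent_partner[OF assms w(1)] by (metis insert_commute)
  qed
  fix e e' assume "e \<in> matching_of \<delta>" "e' \<in> matching_of \<delta>" "v \<in> e" "v \<in> e'"
  then show "e = e'" using unique by blast
qed

lemma perfect_matching_as_dirs:
  assumes M: "pm M" obtains \<delta> where "consistent \<delta>" "matching_of \<delta> = M"
proof -
  have ME: "M \<subseteq> E" using M unfolding perfect_matching_iff by blast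
  have "\<exists>d. {v, nbr v d} \<in> M" if "v \<in> V" for v
  proof -
    obtain e where "e \<in> M" "v \<in> e" using M \<open>v \<in> V\<close> unfolding perfect_matching_iff by blast
    then show ?thesis using edge_from_endpoint ME by (metis subsetD)
  qed
  then obtain d where d: "\<And>v. v \<in> V \<Longrightarrow> {v, nbr v (d v)} \<in> M" by metis
  define \<delta> where "\<delta> v = (if v \<in> V then d v else North)" for v
  have \<delta>M: "{v, nbr v (\<delta> v)} \<in> M" if "v \<in> V" for v using d that unfolding \<delta>_def by simp
  have "consistent \<delta>"
    unfolding consistent_def
  proof (intro conjI ballI allI impI)
    fix v assume v: "v \<in> V"
    let ?w = "nbr v (\<delta> v)"
    have w: "?w \<in> V" using nbr_in_V v by blast
    have "{?w, nbr ?w (opposite (\<delta> v))} \<in> M" using \<delta>M[OF v] v by (simp add: insert_commute)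
    then have "{?w, nbr ?w (\<delta> ?w)} = {?w, nbr ?w (opposite (\<delta> v))}"
      using perfect_matching_unique[OF M w \<delta>M[OF w]] by blast
    then have "nbr ?w (\<delta> ?w) = nbr ?w (opposite (\<delta> v))" using nbr_neq[OF w] by (metis doubleton_eq_iff)
    then show "\<delta> ?w = opposite (\<delta> v)" using nbr_inj[OF w] by blast
  qed (simp add: \<delta>_def)
  moreover have "matching_of \<delta> = M"
  proof
    show "matching_of \<delta> \<subseteq> M" unfolding matching_of_def using \<delta>M by blast
    show "M \<subseteq> matching_of \<delta>"
    proof
      fix e assume e: "e \<in> M"
      then obtain v d where "v \<in> V" "e = {v, nbr v d}" using edge_cases ME by blast
      then have "e = {v, nbr v (\<delta> v)}" using perfect_matching_unique[OF M _ e \<delta>M] by blast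
      then show "e \<in> matching_of \<delta>" using matching_ofI \<open>v \<in> V\<close> by blast
    qed
  qed
  ultimately show ?thesis using that by blast
qed

lemma consistent_update:
  assumes \<delta>: "consistent \<delta>" and QV: "Q \<subseteq> V" and out: "\<And>v. v \<notin> Q \<Longrightarrow> \<delta>' v = \<delta> v"
    and closed: "\<And>v. v \<in> Q \<Longrightarrow> nbr v (\<delta> v) \<in> Q"
    and inside: "\<And>v. v \<in> Q \<Longrightarrow> \<delta>' (nbr v (\<delta>' v)) = opposite (\<delta>' v)"
  shows "consistent \<delta>'"
  unfolding consistent_def
proof (intro conjI ballI allI impI)
  fix v assume v: "v \<in> V"
  show "\<delta>' (nbr v (\<delta>' v)) = opposite (\<delta>' v)"
  proof (cases "v \<in> Q")
    case False
    have "nbr v (\<delta> v) \<notin> Q"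
      using closed consistent_partner[OF \<delta> v refl] False by metis
    then show ?thesis using False out consistentD(1)[OF \<delta> v] by simp
  qed (rule inside)
next
  fix v assume "v \<notin> V"
  then show "\<delta>' v = North" using QV out[of v] consistentD(2)[OF \<delta>] by auto
qed

lemma matching_of_update:
  assumes QV: "Q \<subseteq> V" and out: "\<And>v. v \<notin> Q \<Longrightarrow> \<delta>' v = \<delta> v"
    and closed: "\<And>v. v \<in> Q \<Longrightarrow> nbr v (\<delta> v) \<in> Q"
  shows "matching_of \<delta>' = matching_of \<delta> - {{v, nbr v (\<delta> v)} | v. v \<in> Q} \<union> {{v, nbr v (\<delta>' v)} | v. v \<in> Q}"
    (is "_ = _ - ?old \<union> ?new")
proof -
  have outside: "{v, nbr v (\<delta> v)} \<notin> ?old" if "v \<notin> Q" for v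
  proof
    assume "{v, nbr v (\<delta> v)} \<in> ?old"
    then obtain w where "w \<in> Q" "{v, nbr v (\<delta> v)} = {w, nbr w (\<delta> w)}" by blast
    then show False using that closed by (metis doubleton_eq_iff)
  qed
  have "matching_of \<delta>' = {{v, nbr v (\<delta>' v)} | v. v \<in> V - Q} \<union> ?new"
    unfolding matching_of_def using QV by blast
  also have "{{v, nbr v (\<delta>' v)} | v. v \<in> V - Q} = {{v, nbr v (\<delta> v)} | v. v \<in> V - Q}"
    using out by force
  also have "\<dots> = matching_of \<delta> - ?old"
    unfolding matching_of_def using outside by blast
  finally show ?thesis .
qed

definition square :: "nat \<Rightarrow> nat \<Rightarrow> (nat \<times> nat) set" where
  "square i j = {(i, j), (i, east j), (north i, j), (north i, east j)}"

definition horizontal_square :: "(nat \<times> nat \<Rightarrow> dir) \<Rightarrow> nat \<Rightarrow> nat \<Rightarrow> bool" where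
  "horizontal_square \<delta> i j \<longleftrightarrow>
     \<delta> (i, j) = East \<and> \<delta> (i, east j) = West \<and> \<delta> (north i, j) = East \<and> \<delta> (north i, east j) = West"

definition vertical_square :: "(nat \<times> nat \<Rightarrow> dir) \<Rightarrow> nat \<Rightarrow> nat \<Rightarrow> bool" where
  "vertical_square \<delta> i j \<longleftrightarrow>
     \<delta> (i, j) = North \<and> \<delta> (i, east j) = North \<and> \<delta> (north i, j) = South \<and> \<delta> (north i, east j) = South"

definition make_vertical :: "(nat \<times> nat \<Rightarrow> dir) \<Rightarrow> nat \<Rightarrow> nat \<Rightarrow> nat \<times> nat \<Rightarrow> dir" where
  "make_vertical \<delta> i j =
     \<delta>((i, j) := North, (i, east j) := North, (north i, j) := South, (north i, east j) := South)"

definition make_horizontal :: "(nat \<times> nat \<Rightarrow> dir) \<Rightarrow> nat \<Rightarrow> nat \<Rightarrow> nat \<times> nat \<Rightarrow> dir" where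
  "make_horizontal \<delta> i j =
     \<delta>((i, j) := East, (i, east j) := West, (north i, j) := East, (north i, east j) := West)"

definition square_twist :: "(nat \<times> nat \<Rightarrow> dir) \<Rightarrow> (nat \<times> nat \<Rightarrow> dir) \<Rightarrow> bool" where
  "square_twist \<delta> \<delta>' \<longleftrightarrow> consistent \<delta> \<and> (\<exists>i<R. \<exists>j<C.
     horizontal_square \<delta> i j \<and> \<delta>' = make_vertical \<delta> i j \<or>
     vertical_square \<delta> i j \<and> \<delta>' = make_horizontal \<delta> i j)"

lemma square_corners_distinct:
  assumes "i < R" "j < C"
  shows "(i, j) \<noteq> (i, east j)" "(i, j) \<noteq> (north i, j)" "(i, j) \<noteq> (north i, east j)"
    "(i, east j) \<noteq> (north i, j)" "(i, east j) \<noteq> (north i, east j)" "(north i, j) \<noteq> (north i, east j)"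
  using assms by (auto dest: sym)

lemma square_subset_V: "i < R \<Longrightarrow> j < C \<Longrightarrow> square i j \<subseteq> V"
  unfolding square_def by auto

lemma make_vertical_outside: "v \<notin> square i j \<Longrightarrow> make_vertical \<delta> i j v = \<delta> v"
  unfolding square_def make_vertical_def by auto

lemma make_horizontal_outside: "v \<notin> square i j \<Longrightarrow> make_horizontal \<delta> i j v = \<delta> v"
  unfolding square_def make_horizontal_def by auto

lemma vertical_square_make_vertical: "i < R \<Longrightarrow> j < C \<Longrightarrow> vertical_square (make_vertical \<delta> i j) i j"
  unfolding vertical_square_def make_vertical_def using square_corners_distinct[of i j] by auto

lemma horizontal_square_make_horizontal:
  "i < R \<Longrightarrow> j < C \<Longrightarrow> horizontal_square (make_horizontal \<delta> i j) i j"
  unfolding horizontal_square_def make_horizontal_def using square_corners_distinct[of i j] by auto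

lemma horizontal_square_closed:
  "i < R \<Longrightarrow> j < C \<Longrightarrow> horizontal_square \<delta> i j \<Longrightarrow> v \<in> square i j \<Longrightarrow> nbr v (\<delta> v) \<in> square i j"
  unfolding square_def horizontal_square_def by auto

lemma vertical_square_closed:
  "i < R \<Longrightarrow> j < C \<Longrightarrow> vertical_square \<delta> i j \<Longrightarrow> v \<in> square i j \<Longrightarrow> nbr v (\<delta> v) \<in> square i j"
  unfolding square_def vertical_square_def by auto

lemma horizontal_square_consistent:
  "i < R \<Longrightarrow> j < C \<Longrightarrow> horizontal_square \<delta> i j \<Longrightarrow> v \<in> square i j \<Longrightarrow>
    \<delta> (nbr v (\<delta> v)) = opposite (\<delta> v)"
  unfolding square_def horizontal_square_def by auto

lemma vertical_square_consistent:
  "i < R \<Longrightarrow> j < C \<Longrightarrow> vertical_square \<delta> i j \<Longrightarrow> v \<in> square i j \<Longrightarrow>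
    \<delta> (nbr v (\<delta> v)) = opposite (\<delta> v)"
  unfolding square_def vertical_square_def by auto

lemma square_twist_consistent:
  assumes "square_twist \<delta> \<delta>'" shows "consistent \<delta>'"
proof -
  obtain i j where ij: "i < R" "j < C" and \<delta>: "consistent \<delta>"
    and cases: "horizontal_square \<delta> i j \<and> \<delta>' = make_vertical \<delta> i j \<or>
      vertical_square \<delta> i j \<and> \<delta>' = make_horizontal \<delta> i j"
    using assms unfolding square_twist_def by blast
  from cases show ?thesis
  proof (elim disjE conjE)
    assume "horizontal_square \<delta> i j" "\<delta>' = make_vertical \<delta> i j"
    then show ?thesis
      using ij by (intro consistent_update[OF \<delta> square_subset_V[OF ij], of \<delta>'])
        (auto simp: make_vertical_outside horizontal_square_closed intro: vertical_square_consistent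
          vertical_square_make_vertical)
  next
    assume "vertical_square \<delta> i j" "\<delta>' = make_horizontal \<delta> i j"
    then show ?thesis
      using ij by (intro consistent_update[OF \<delta> square_subset_V[OF ij], of \<delta>'])
        (auto simp: make_horizontal_outside vertical_square_closed intro: horizontal_square_consistent
          horizontal_square_make_horizontal)
  qed
qed

definition bottom_edge :: "nat \<Rightarrow> nat \<Rightarrow> (nat \<times> nat) set" where
  "bottom_edge i j = {(i, j), (i, east j)}"
definition top_edge :: "nat \<Rightarrow> nat \<Rightarrow> (nat \<times> nat) set" where
  "top_edge i j = {(north i, j), (north i, east j)}"
definition left_edge :: "nat \<Rightarrow> nat \<Rightarrow> (nat \<times> nat) set" where
  "left_edge i j = {(i, j), (north i, j)}"
definition right_edge :: "nat \<Rightarrow> nat \<Rightarrow> (nat \<times> nat) set" where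
  "right_edge i j = {(i, east j), (north i, east j)}"

lemmas square_edge_defs = bottom_edge_def top_edge_def left_edge_def right_edge_def

lemma square_edges:
  assumes ij: "i < R" "j < C"
  shows "bottom_edge i j \<in> E" "top_edge i j \<in> E" "left_edge i j \<in> E" "right_edge i j \<in> E"
    "bottom_edge i j \<union> top_edge i j = left_edge i j \<union> right_edge i j"
    "bottom_edge i j \<inter> top_edge i j = {}" "left_edge i j \<inter> right_edge i j = {}"
    "{bottom_edge i j, top_edge i j} \<inter> {left_edge i j, right_edge i j} = {}"
proof -
  show "bottom_edge i j \<in> E" "top_edge i j \<in> E" "left_edge i j \<in> E" "right_edge i j \<in> E"
    using edge_nbr[of "(i, j)" East] edge_nbr[of "(north i, j)" East] edge_nbr[of "(i, j)" North]
      edge_nbr[of "(i, east j)" North] ij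
    unfolding square_edge_defs by simp_all
  show "bottom_edge i j \<union> top_edge i j = left_edge i j \<union> right_edge i j"
    unfolding square_edge_defs by auto
  show "bottom_edge i j \<inter> top_edge i j = {}" "left_edge i j \<inter> right_edge i j = {}"
    "{bottom_edge i j, top_edge i j} \<inter> {left_edge i j, right_edge i j} = {}"
    unfolding square_edge_defs using square_corners_distinct[OF ij] by (auto simp: doubleton_eq_iff)
qed

lemma horizontal_square_edges:
  assumes "horizontal_square \<delta> i j" "i < R" "j < C"
  shows "{{v, nbr v (\<delta> v)} | v. v \<in> square i j} = {bottom_edge i j, top_edge i j}"
proof
  show "{{v, nbr v (\<delta> v)} | v. v \<in> square i j} \<subseteq> {bottom_edge i j, top_edge i j}"
    using assms unfolding square_def horizontal_square_def square_edge_defs by (auto simp: insert_commute)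
  have "bottom_edge i j = {(i, j), nbr (i, j) (\<delta> (i, j))}"
    "top_edge i j = {(north i, j), nbr (north i, j) (\<delta> (north i, j))}"
    using assms unfolding horizontal_square_def square_edge_defs by auto
  moreover have "(i, j) \<in> square i j" "(north i, j) \<in> square i j" unfolding square_def by auto
  ultimately show "{bottom_edge i j, top_edge i j} \<subseteq> {{v, nbr v (\<delta> v)} | v. v \<in> square i j}" by blast
qed

lemma vertical_square_edges:
  assumes "vertical_square \<delta> i j" "i < R" "j < C"
  shows "{{v, nbr v (\<delta> v)} | v. v \<in> square i j} = {left_edge i j, right_edge i j}"
proof
  show "{{v, nbr v (\<delta> v)} | v. v \<in> square i j} \<subseteq> {left_edge i j, right_edge i j}"
    using assms unfolding square_def vertical_square_def square_edge_defs by (auto simp: insert_commute)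
  have "left_edge i j = {(i, j), nbr (i, j) (\<delta> (i, j))}"
    "right_edge i j = {(i, east j), nbr (i, east j) (\<delta> (i, east j))}"
    using assms unfolding vertical_square_def square_edge_defs by auto
  moreover have "(i, j) \<in> square i j" "(i, east j) \<in> square i j" unfolding square_def by auto
  ultimately show "{left_edge i j, right_edge i j} \<subseteq> {{v, nbr v (\<delta> v)} | v. v \<in> square i j}" by blast
qed

lemma twist_make_vertical:
  assumes \<delta>: "consistent \<delta>" and ij: "i < R" "j < C" and h: "horizontal_square \<delta> i j"
  shows "twist (matching_of \<delta>) (matching_of (make_vertical \<delta> i j))"
proof -
  note edges = square_edges[OF ij]
  have "matching_of (make_vertical \<delta> i j) = matching_of \<delta> - {{v, nbr v (\<delta> v)} | v. v \<in> square i j}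
      \<union> {{v, nbr v (make_vertical \<delta> i j v)} | v. v \<in> square i j}"
    by (rule matching_of_update[OF square_subset_V[OF ij]])
      (auto simp: make_vertical_outside horizontal_square_closed[OF ij h])
  then have "matching_of (make_vertical \<delta> i j) =
      matching_of \<delta> - {bottom_edge i j, top_edge i j} \<union> {left_edge i j, right_edge i j}"
    unfolding horizontal_square_edges[OF h ij]
      vertical_square_edges[OF vertical_square_make_vertical[OF ij] ij] .
  moreover have "{{v, nbr v (\<delta> v)} | v. v \<in> square i j} \<subseteq> matching_of \<delta>"
    unfolding matching_of_def using square_subset_V[OF ij] by blast
  then have "bottom_edge i j \<in> matching_of \<delta>" "top_edge i j \<in> matching_of \<delta>"
    unfolding horizontal_square_edges[OF h ij] by simp_all
  ultimately show ?thesis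
    using twistI[OF consistent_perfect_matching[OF \<delta>] _ _ edges(3, 4,5,6,7,8)] by simp
qed

lemma make_vertical_make_horizontal:
  "vertical_square \<delta> i j \<Longrightarrow> make_vertical (make_horizontal \<delta> i j) i j = \<delta>"
  unfolding vertical_square_def make_vertical_def make_horizontal_def by (auto simp: fun_eq_iff)

lemma square_twist_twist:
  assumes "square_twist \<delta> \<delta>'" shows "twist (matching_of \<delta>) (matching_of \<delta>')"
proof -
  obtain i j where ij: "i < R" "j < C" and \<delta>: "consistent \<delta>"
    and cases: "horizontal_square \<delta> i j \<and> \<delta>' = make_vertical \<delta> i j \<or>
      vertical_square \<delta> i j \<and> \<delta>' = make_horizontal \<delta> i j"
    using assms unfolding square_twist_def by blast
  from cases show ?thesis
  proof (elim disjE conjE)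
    assume "vertical_square \<delta> i j" "\<delta>' = make_horizontal \<delta> i j"
    then have "twist (matching_of \<delta>') (matching_of \<delta>)"
      using twist_make_vertical[OF square_twist_consistent[OF assms] ij]
        horizontal_square_make_horizontal[OF ij]
        make_vertical_make_horizontal by metis
    then show ?thesis by (rule twist_sym)
  qed (use twist_make_vertical[OF \<delta> ij] in simp)
qed

lemma square_twists_twists:
  "square_twist\<^sup>*\<^sup>* \<delta> \<delta>' \<Longrightarrow> twist\<^sup>*\<^sup>* (matching_of \<delta>) (matching_of \<delta>')"
  by (induction rule: rtranclp_induct) (auto intro: rtranclp.rtrancl_into_rtrancl square_twist_twist)

lemma square_twists_consistent: "square_twist\<^sup>*\<^sup>* \<delta> \<delta>' \<Longrightarrow> consistent \<delta> \<Longrightarrow> consistent \<delta>'"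
  by (induction rule: rtranclp_induct) (auto intro: square_twist_consistent)

section \<open>Removing horizontal edges\<close>

definition horizontal :: "(nat \<times> nat \<Rightarrow> dir) \<Rightarrow> nat \<Rightarrow> nat \<Rightarrow> bool" where
  "horizontal \<delta> i j \<longleftrightarrow> \<delta> (i, j) = West \<or> \<delta> (i, j) = East"

definition no_horizontal_between :: "(nat \<times> nat \<Rightarrow> dir) \<Rightarrow> nat \<Rightarrow> nat \<Rightarrow> nat \<Rightarrow> bool" where
  "no_horizontal_between \<delta> j p g \<longleftrightarrow> (\<forall>k. 0 < k \<and> k < g \<longrightarrow> \<not> horizontal \<delta> (rowshift p k) j)"

lemma partner_East: "consistent \<delta> \<Longrightarrow> i < R \<Longrightarrow> j < C \<Longrightarrow> \<delta> (i, j) = East \<Longrightarrow> \<delta> (i, east j) = West"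
  using consistentD(1)[of \<delta> "(i, j)"] by simp
lemma partner_West: "consistent \<delta> \<Longrightarrow> i < R \<Longrightarrow> j < C \<Longrightarrow> \<delta> (i, j) = West \<Longrightarrow> \<delta> (i, west j) = East"
  using consistentD(1)[of \<delta> "(i, j)"] by simp
lemma partner_North: "consistent \<delta> \<Longrightarrow> i < R \<Longrightarrow> j < C \<Longrightarrow> \<delta> (i, j) = North \<Longrightarrow> \<delta> (north i, j) = South"
  using consistentD(1)[of \<delta> "(i, j)"] by simp
lemma partner_South: "consistent \<delta> \<Longrightarrow> i < R \<Longrightarrow> j < C \<Longrightarrow> \<delta> (i, j) = South \<Longrightarrow> \<delta> (south i, j) = North"
  using consistentD(1)[of \<delta> "(i, j)"] by simp
lemma partner_East_rev: "consistent \<delta> \<Longrightarrow> i < R \<Longrightarrow> j < C \<Longrightarrow> \<delta> (i, east j) = West \<Longrightarrow> \<delta> (i, j) = East"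
  using partner_West[of \<delta> i "east j"] by simp
lemma partner_West_rev: "consistent \<delta> \<Longrightarrow> i < R \<Longrightarrow> j < C \<Longrightarrow> \<delta> (i, west j) = East \<Longrightarrow> \<delta> (i, j) = West"
  using partner_East[of \<delta> i "west j"] by simp
lemma partner_North_rev: "consistent \<delta> \<Longrightarrow> i < R \<Longrightarrow> j < C \<Longrightarrow> \<delta> (north i, j) = South \<Longrightarrow> \<delta> (i, j) = North"
  using partner_South[of \<delta> "north i" j] by simp

lemma not_horizontal: "\<not> horizontal \<delta> i j \<Longrightarrow> \<delta> (i, j) = North \<or> \<delta> (i, j) = South"
  unfolding horizontal_def by (cases "\<delta> (i, j)") auto

lemma no_horizontal_between_rowshift:
  assumes "no_horizontal_between \<delta> j p g" "k \<le> g"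
  shows "no_horizontal_between \<delta> j (rowshift p k) (g - k)"
  using assms unfolding no_horizontal_between_def
  by (metis add.commute less_diff_conv rowshift_rowshift trans_less_add2)

lemma north_of_non_north:
  assumes cons: "consistent \<delta>" and p: "p < R" and j: "j < C"
    and "\<delta> (p, j) \<noteq> North" "\<not> horizontal \<delta> (north p) j"
  shows "\<delta> (north p, j) = North"
  using assms not_horizontal partner_North_rev[OF cons p j] by blast

text \<open>Between two consecutive horizontally matched vertices of a column, the vertices are
  matched vertically among themselves; so the gap is odd.\<close>

lemma odd_gap:
  assumes cons: "consistent \<delta>" and j: "j < C"
  shows "p < R \<Longrightarrow> \<delta> (p, j) \<noteq> North \<Longrightarrow> 0 < g \<Longrightarrow> g \<le> R \<Longrightarrow> horizontal \<delta> (rowshift p g) j \<Longrightarrow>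
    no_horizontal_between \<delta> j p g \<Longrightarrow> odd g"
proof (induction g arbitrary: p rule: less_induct)
  case (less g)
  show ?case
  proof (cases "g = 1")
    case False
    then have "2 \<le> g" using less.prems by simp
    then have "\<not> horizontal \<delta> (north p) j"
      using less.prems(6) unfolding no_horizontal_between_def north_def by simp
    then have "\<delta> (north p, j) = North"
      using north_of_non_north[OF cons less.prems(1) j less.prems(2)] by blast
    then have south: "\<delta> (rowshift p 2, j) = South"
      using partner_North[OF cons _ j, of "north p"] north_north by simp
    then have "g \<noteq> 2" using less.prems(5) unfolding horizontal_def by auto
    then have "3 \<le> g" using \<open>2 \<le> g\<close> by simp
    have "odd (g - 2)"
    proof (rule less.IH[of "g - 2" "rowshift p 2"])
      show "g - 2 < g" "rowshift p 2 < R" "\<delta> (rowshift p 2, j) \<noteq> North" "0 < g - 2" "g - 2 \<le> R"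
        using \<open>3 \<le> g\<close> south less.prems by auto
      show "horizontal \<delta> (rowshift (rowshift p 2) (g - 2)) j"
        using less.prems(5) \<open>3 \<le> g\<close> rowshift_diff[of 2 g p] by simp
      show "no_horizontal_between \<delta> j (rowshift p 2) (g - 2)"
        using no_horizontal_between_rowshift[OF less.prems(6)] \<open>3 \<le> g\<close> by simp
    qed
    then show ?thesis using \<open>3 \<le> g\<close> by simp
  qed simp
qed

lemma next_horizontal:
  assumes cons: "consistent \<delta>" and j: "j < C" and p: "p < R" and h: "horizontal \<delta> p j"
  obtains g where "0 < g" "g < R" "odd g" "horizontal \<delta> (rowshift p g) j" "no_horizontal_between \<delta> j p g"
proof -
  define P where "P g \<longleftrightarrow> 0 < g \<and> horizontal \<delta> (rowshift p g) j" for g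
  have PR: "P R" unfolding P_def using rowshift_R[OF p] h R_ge_4 by simp
  define g where "g = (LEAST g. P g)"
  have Pg: "P g" unfolding g_def using PR by (rule LeastI)
  have gR: "g \<le> R" unfolding g_def using PR by (rule Least_le)
  have between: "no_horizontal_between \<delta> j p g"
    unfolding no_horizontal_between_def
  proof (intro allI impI)
    fix k assume k: "0 < k \<and> k < g"
    then have "\<not> P k" unfolding g_def by (rule not_less_Least[OF conjunct2])
    then show "\<not> horizontal \<delta> (rowshift p k) j" using k unfolding P_def by blast
  qed
  have "\<delta> (p, j) \<noteq> North" using h unfolding horizontal_def by auto
  then have "odd g" using odd_gap[OF cons j p _ _ gR _ between] Pg unfolding P_def by blast
  moreover have "g < R" using \<open>odd g\<close> even_R gR by (cases "g = R") auto
  ultimately show ?thesis using that Pg between unfolding P_def by blast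
qed

definition parallel_pair :: "(nat \<times> nat \<Rightarrow> dir) \<Rightarrow> dir \<Rightarrow> nat \<Rightarrow> nat \<Rightarrow> nat \<Rightarrow> bool" where
  "parallel_pair \<delta> s j p g \<longleftrightarrow> j < C \<and> p < R \<and> 0 < g \<and> g < R \<and>
     \<delta> (p, j) = s \<and> \<delta> (rowshift p g, j) = s \<and> no_horizontal_between \<delta> j p g"

definition clean_pair :: "(nat \<times> nat \<Rightarrow> dir) \<Rightarrow> nat \<Rightarrow> nat \<Rightarrow> nat \<Rightarrow> bool" where
  "clean_pair \<delta> j p g \<longleftrightarrow> parallel_pair \<delta> East j p g \<and> no_horizontal_between \<delta> (east j) p g"

text \<open>The horizontal vertices of column \<open>j'\<close> strictly between the rows cannot be matched into
  column \<open>j\<close>, so they point like \<open>s\<close>. Gaps between consecutive horizontal vertices are odd and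
  \<open>g\<close> is odd, so the first two of them after \<open>p\<close> both lie strictly between.\<close>

lemma smaller_parallel_pair:
  assumes cons: "consistent \<delta>" and pair: "parallel_pair \<delta> s j p g" and s: "s = West \<or> s = East"
    and j': "j' < C" and partner: "\<And>x. x < R \<Longrightarrow> \<delta> (x, j') = opposite s \<Longrightarrow> \<delta> (x, j) = s"
    and ends: "\<delta> (p, j') = opposite s" "\<delta> (rowshift p g, j') = opposite s"
    and crowded: "\<not> no_horizontal_between \<delta> j' p g"
  obtains p' g' where "g' < g" "parallel_pair \<delta> s j' p' g'"
proof -
  have j: "j < C" and p: "p < R" and g: "0 < g" "g < R" and at_j: "\<delta> (p, j) = s" "\<delta> (rowshift p g, j) = s"
    and between: "no_horizontal_between \<delta> j p g"
    using pair unfolding parallel_pair_def by auto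
  have horizontal_ends: "horizontal \<delta> p j'" "horizontal \<delta> (rowshift p g) j'"
    using ends s unfolding horizontal_def by auto
  have "odd g" using odd_gap[OF cons j p _ g(1) _ _ between] at_j s g by (auto simp: horizontal_def)
  have inner_dir: "\<delta> (rowshift p k, j') = s" if "0 < k" "k < g" "horizontal \<delta> (rowshift p k) j'" for k
  proof -
    have "\<not> horizontal \<delta> (rowshift p k) j" using between that unfolding no_horizontal_between_def by blast
    then have "\<delta> (rowshift p k, j') \<noteq> opposite s" using partner s unfolding horizontal_def by auto
    then show ?thesis using that(3) s unfolding horizontal_def by auto
  qed
  obtain k where k: "0 < k" "odd k" "horizontal \<delta> (rowshift p k) j'" "no_horizontal_between \<delta> j' p k"
    using next_horizontal[OF cons j' p horizontal_ends(1)] by blast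
  have "k < g"
    using crowded k(4) unfolding no_horizontal_between_def by (metis linorder_neqE_nat order.strict_trans)
  obtain l where l: "0 < l" "l < R" "odd l" "horizontal \<delta> (rowshift (rowshift p k) l) j'"
      "no_horizontal_between \<delta> j' (rowshift p k) l"
    using next_horizontal[OF cons j' rowshift_lt k(3)] by blast
  have "\<not> g - k < l"
  proof
    assume "g - k < l"
    then have "\<not> horizontal \<delta> (rowshift (rowshift p k) (g - k)) j'"
      using l(5) \<open>k < g\<close> unfolding no_horizontal_between_def by simp
    then show False using horizontal_ends(2) rowshift_diff[of k g p] \<open>k < g\<close> by simp
  qed
  moreover have "g - k \<noteq> l" using \<open>odd g\<close> \<open>odd k\<close> \<open>odd l\<close> \<open>k < g\<close> by presburger
  ultimately have "k + l < g" by linarith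
  then have "parallel_pair \<delta> s j' (rowshift p k) l"
    unfolding parallel_pair_def using inner_dir[of k] inner_dir[of "k + l"] j' l k \<open>k < g\<close>
    by (simp add: rowshift_rowshift)
  moreover have "l < g" using \<open>k + l < g\<close> by simp
  ultimately show ?thesis using that by blast
qed

lemma clean_pair_if_parallel_pair:
  assumes cons: "consistent \<delta>"
  shows "parallel_pair \<delta> s j p g \<Longrightarrow> s = West \<or> s = East \<Longrightarrow> \<exists>j p g. clean_pair \<delta> j p g"
proof (induction g arbitrary: s j p rule: less_induct)
  case (less g)
  have j: "j < C" and p: "p < R" and g: "0 < g" "g < R" and ends: "\<delta> (p, j) = s" "\<delta> (rowshift p g, j) = s"
    and between: "no_horizontal_between \<delta> j p g"
    using less.prems(1) unfolding parallel_pair_def by auto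
  from less.prems(2) show ?case
  proof
    assume s: "s = East"
    show ?thesis
    proof (cases "no_horizontal_between \<delta> (east j) p g")
      case True
      then show ?thesis using less.prems(1) s unfolding clean_pair_def by blast
    next
      case False
      obtain p' g' where "g' < g" "parallel_pair \<delta> East (east j) p' g'"
        by (rule smaller_parallel_pair[OF cons less.prems(1)[unfolded s] _ _ _ _ _ False])
          (use partner_East_rev[OF cons _ j] partner_East[OF cons _ j] ends s p in auto)
      then show ?thesis using less.IH by blast
    qed
  next
    assume s: "s = West"
    show ?thesis
    proof (cases "no_horizontal_between \<delta> (west j) p g")
      case True
      have "parallel_pair \<delta> East (west j) p g"
        unfolding parallel_pair_def using True partner_West[OF cons _ j] ends s p g by auto
      moreover have "no_horizontal_between \<delta> (east (west j)) p g" using between j by simp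
      ultimately show ?thesis unfolding clean_pair_def by blast
    next
      case False
      obtain p' g' where "g' < g" "parallel_pair \<delta> West (west j) p' g'"
        by (rule smaller_parallel_pair[OF cons less.prems(1)[unfolded s] _ _ _ _ _ False])
          (use partner_West_rev[OF cons _ j] partner_West[OF cons _ j] ends s p in auto)
      then show ?thesis using less.IH by blast
    qed
  qed
qed

lemma alternating_if_no_parallel_pair:
  assumes cons: "consistent \<delta>" and j: "j < C" and x: "x < R" and hx: "horizontal \<delta> x j"
    and no_pair: "\<And>s p g. s = West \<or> s = East \<Longrightarrow> \<not> parallel_pair \<delta> s j p g"
  shows "d < R \<Longrightarrow> horizontal \<delta> (rowshift x d) j \<Longrightarrow> \<delta> (rowshift x d, j) = \<delta> (x, j) \<longleftrightarrow> even d"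
proof (induction d rule: less_induct)
  case (less d)
  show ?case
  proof (cases "d = 0")
    case False
    define S where "S = {e. e < d \<and> horizontal \<delta> (rowshift x e) j}"
    have "finite S" "0 \<in> S" unfolding S_def using False hx x by auto
    define d' where "d' = Max S"
    have "d' \<in> S" using Max_in[OF \<open>finite S\<close>] \<open>0 \<in> S\<close> unfolding d'_def by blast
    then have d': "d' < d" "horizontal \<delta> (rowshift x d') j" unfolding S_def by auto
    have "no_horizontal_between \<delta> j (rowshift x d') (d - d')"
      unfolding no_horizontal_between_def
    proof (intro allI impI)
      fix k assume k: "0 < k \<and> k < d - d'"
      then have "d' + k \<notin> S" using Max_ge[OF \<open>finite S\<close>] unfolding d'_def by fastforce
      then show "\<not> horizontal \<delta> (rowshift (rowshift x d') k) j"
        using k unfolding S_def by (auto simp: rowshift_rowshift)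
    qed
    moreover have last: "horizontal \<delta> (rowshift (rowshift x d') (d - d')) j"
      using rowshift_diff[of d' d x] d' less.prems by simp
    moreover have "\<delta> (rowshift x d', j) \<noteq> North" using d'(2) unfolding horizontal_def by auto
    ultimately have "odd (d - d')"
      using odd_gap[OF cons j rowshift_lt _ _ _ last] d' less.prems by simp
    have "\<delta> (rowshift x d, j) \<noteq> \<delta> (rowshift x d', j)"
    proof
      assume same: "\<delta> (rowshift x d, j) = \<delta> (rowshift x d', j)"
      have "parallel_pair \<delta> (\<delta> (rowshift x d', j)) j (rowshift x d') (d - d')"
        unfolding parallel_pair_def using j d' less.prems same rowshift_diff[of d' d x]
          \<open>no_horizontal_between \<delta> j (rowshift x d') (d - d')\<close> by auto
      then show False using no_pair d'(2) unfolding horizontal_def by blast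
    qed
    moreover have "\<delta> (rowshift x d', j) = \<delta> (x, j) \<longleftrightarrow> even d'" using less.IH[of d'] d' less.prems by simp
    ultimately show ?thesis
      using \<open>odd (d - d')\<close> d' less.prems hx unfolding horizontal_def by auto
  qed (use x in simp)
qed

lemma east_vertex_in_every_column:
  assumes cons: "consistent \<delta>" and no_pair: "\<And>s j p g. s = West \<or> s = East \<Longrightarrow> \<not> parallel_pair \<delta> s j p g"
    and j: "j < C" and r: "r < R" "\<delta> (r, j) = East"
  shows "\<exists>r'. r' < R \<and> \<delta> (r', colshift j t) = East \<and> (even r' \<longleftrightarrow> (even r \<longleftrightarrow> even t))"
proof (induction t)
  case 0
  then show ?case using r j by auto
next
  case (Suc t)
  then obtain r' where r': "r' < R" "\<delta> (r', colshift j t) = East" "even r' \<longleftrightarrow> (even r \<longleftrightarrow> even t)"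
    by blast
  let ?j = "east (colshift j t)"
  have west: "\<delta> (r', ?j) = West" using partner_East[OF cons r'(1) colshift_lt r'(2)] .
  then have "horizontal \<delta> r' ?j" unfolding horizontal_def by simp
  then obtain g where g: "0 < g" "g < R" "odd g" "horizontal \<delta> (rowshift r' g) ?j"
      "no_horizontal_between \<delta> ?j r' g"
    using next_horizontal[OF cons east_lt r'(1)] by blast
  have "\<not> parallel_pair \<delta> West ?j r' g" using no_pair by blast
  then have "\<delta> (rowshift r' g, ?j) = East"
    using g west r' unfolding parallel_pair_def horizontal_def by auto
  moreover have "even (rowshift r' g) \<longleftrightarrow> (even r \<longleftrightarrow> even (Suc t))"
    using even_rowshift[of r' g] g(3) r'(3) by auto
  ultimately show ?case using rowshift_lt east_colshift by metis
qed

text \<open>Following East-pointing vertices once around the odd cycle of columns changes the parity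
  of the row, which contradicts the alternation in the starting column.\<close>

lemma parallel_pair_exists:
  assumes cons: "consistent \<delta>" and h: "i < R" "j < C" "horizontal \<delta> i j"
  shows "\<exists>s j p g. (s = West \<or> s = East) \<and> parallel_pair \<delta> s j p g"
proof (rule ccontr)
  assume "\<not> ?thesis"
  then have no_pair: "\<And>s j p g. s = West \<or> s = East \<Longrightarrow> \<not> parallel_pair \<delta> s j p g" by blast
  obtain r j0 where r: "r < R" "j0 < C" "\<delta> (r, j0) = East"
  proof (cases "\<delta> (i, j) = East")
    case False
    then have "\<delta> (i, west j) = East"
      using partner_West[OF cons h(1, 2)] h(3) unfolding horizontal_def by blast
    then show ?thesis using that[of i "west j"] h(1) by simp
  qed (use that h in simp)
  obtain r' where r': "r' < R" "\<delta> (r', j0) = East" "even r' \<longleftrightarrow> odd r"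
    using east_vertex_in_every_column[OF cons no_pair r(2, 1, 3), of C] colshift_C[OF r(2)] odd_C by auto
  define d where "d = row_offset r r'"
  have "rowshift r d = r'" unfolding d_def using rowshift_row_offset[OF r(1) r'(1)] .
  then have "even d"
    using alternating_if_no_parallel_pair[OF cons r(2, 1) _ no_pair, of d] r r'
    unfolding d_def horizontal_def by auto
  then show False using even_rowshift[of r d] \<open>rowshift r d = r'\<close> r' by simp
qed

lemma clean_pair_exists:
  assumes "consistent \<delta>" "i < R" "j < C" "horizontal \<delta> i j"
  shows "\<exists>j p g. clean_pair \<delta> j p g"
  using clean_pair_if_parallel_pair[OF assms(1)] parallel_pair_exists[OF assms] by blast

text \<open>The rows \<open>p, \<dots>, p + g\<close> of the columns \<open>j\<close> and \<open>j + 1\<close>, matched vertically in the pairs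
  \<open>(p, p + 1), (p + 2, p + 3), \<dots>\<close>; \<open>row_offset p i\<close> is the height of row \<open>i\<close> above \<open>p\<close>.\<close>

definition verticalize :: "(nat \<times> nat \<Rightarrow> dir) \<Rightarrow> nat \<Rightarrow> nat \<Rightarrow> nat \<Rightarrow> nat \<times> nat \<Rightarrow> dir" where
  "verticalize \<delta> j p g = (\<lambda>(i, j'). if i < R \<and> (j' = j \<or> j' = east j) \<and> row_offset p i \<le> g
      then (if even (row_offset p i) then North else South) else \<delta> (i, j'))"

lemma fun_eq_pairI: "(\<And>i j. f (i, j) = g (i, j)) \<Longrightarrow> f = g"
  by (rule ext) (metis prod.collapse)

lemma row_offset_small:
  assumes "p < R" "i < R"
  shows "row_offset p i = 0 \<longleftrightarrow> i = p" "row_offset p i = 1 \<longleftrightarrow> i = north p"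
  using rowshift_row_offset[of p i] row_offset_rowshift[of p 0] row_offset_rowshift[of p 1] R_ge_4 assms
  unfolding north_def by auto

lemma rowshift_neq_first_rows:
  assumes "p < R" "3 \<le> k" "k < R"
  shows "rowshift p k \<noteq> p" "rowshift p k \<noteq> north p" "rowshift p k \<noteq> north (north p)"
  using rowshift_inj[of k 0 p] rowshift_inj[of k 1 p] rowshift_inj[of k 2 p] assms
  unfolding north_north by (auto simp: north_def)

lemma row_offset_rowshift_2:
  assumes p: "p < R" and i: "i < R"
  shows "row_offset (rowshift p 2) i =
    (if 2 \<le> row_offset p i then row_offset p i - 2 else row_offset p i + R - 2)"
proof -
  define k where "k = row_offset p i"
  define m where "m = (if 2 \<le> k then k - 2 else k + R - 2)"
  have "i = rowshift p k" "k < R" unfolding k_def using rowshift_row_offset[OF p i] by simp_all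
  then have "i = rowshift (rowshift p 2) m" "m < R"
    unfolding m_def
    using rowshift_diff[of 2 k p] rowshift_diff[of 2 "k + R" p] rowshift_add_R[of p k] R_ge_4
    by auto
  then have "row_offset (rowshift p 2) i = m" using row_offset_rowshift[OF rowshift_lt] by simp
  then show ?thesis unfolding m_def k_def .
qed

lemma clean_pair_gap_1:
  assumes cons: "consistent \<delta>" and clean: "clean_pair \<delta> j p 1"
  shows "square_twist \<delta> (verticalize \<delta> j p 1)"
proof -
  have j: "j < C" and p: "p < R" and ends: "\<delta> (p, j) = East" "\<delta> (north p, j) = East"
    using clean unfolding clean_pair_def parallel_pair_def north_def by auto
  have "horizontal_square \<delta> p j"
    unfolding horizontal_square_def using ends partner_East[OF cons _ j] p by simp
  moreover have "make_vertical \<delta> p j = verticalize \<delta> j p 1"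
  proof (rule fun_eq_pairI)
    fix i j'
    show "make_vertical \<delta> p j (i, j') = verticalize \<delta> j p 1 (i, j')"
    proof (cases "i < R \<and> (j' = j \<or> j' = east j)")
      case True
      then consider "i = p" "row_offset p i = 0" | "i = north p" "row_offset p i = 1"
        | "i \<noteq> p" "i \<noteq> north p" "\<not> row_offset p i \<le> 1"
        using row_offset_small[OF p] by force
      then show ?thesis
        using True p j unfolding make_vertical_def verticalize_def by cases (auto dest: sym)
    qed (auto simp: make_vertical_def verticalize_def p)
  qed
  ultimately show ?thesis unfolding square_twist_def using cons p j by metis
qed

definition raise_pair :: "(nat \<times> nat \<Rightarrow> dir) \<Rightarrow> nat \<Rightarrow> nat \<Rightarrow> nat \<times> nat \<Rightarrow> dir" where
  "raise_pair \<delta> j p = make_vertical (make_horizontal \<delta> (north p) j) p j"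

lemma raise_pair_apply:
  assumes "p < R" "j < C"
  shows "raise_pair \<delta> j p (i, j') =
    (if (j' = j \<or> j' = east j) \<and> i = p then North
     else if (j' = j \<or> j' = east j) \<and> i = north p then South
     else if j' = j \<and> i = north (north p) then East
     else if j' = east j \<and> i = north (north p) then West else \<delta> (i, j'))"
  using north_north_neq[of p] assms
  unfolding raise_pair_def make_vertical_def make_horizontal_def by (auto dest: sym)

context
  fixes \<delta> :: "nat \<times> nat \<Rightarrow> dir" and j p g :: nat
  assumes cons: "consistent \<delta>" and clean: "clean_pair \<delta> j p g" and gap: "g \<noteq> 1"
begin

lemma clean_pair_data:
  shows "j < C" "p < R" "g < R" "\<delta> (p, j) = East" "\<delta> (rowshift p g, j) = East"
    "no_horizontal_between \<delta> j p g" "no_horizontal_between \<delta> (east j) p g"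
  using clean unfolding clean_pair_def parallel_pair_def by auto

lemma clean_pair_second_row: "\<delta> (north p, j) = North" "\<delta> (north p, east j) = North"
proof -
  note data = clean_pair_data
  have "2 \<le> g" using gap clean unfolding clean_pair_def parallel_pair_def by auto
  then have "\<not> horizontal \<delta> (north p) j" "\<not> horizontal \<delta> (north p) (east j)"
    using data(6, 7) unfolding no_horizontal_between_def north_def by auto
  then show "\<delta> (north p, j) = North" "\<delta> (north p, east j) = North"
    using north_of_non_north[OF cons data(2)] data(1, 4) partner_East[OF cons data(2, 1,4)] by auto
qed

lemma clean_pair_gap_ge_3: "3 \<le> g"
proof -
  have "\<delta> (rowshift p 2, j) = South"
    using partner_North[OF cons north_lt clean_pair_data(1) clean_pair_second_row(1)] north_north by simp
  then show ?thesis
    using gap clean_pair_data(5) clean unfolding clean_pair_def parallel_pair_def by (cases "g = 2") auto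
qed

lemma square_twists_raise_pair: "square_twist\<^sup>*\<^sup>* \<delta> (raise_pair \<delta> j p)"
proof -
  note data = clean_pair_data
  have "vertical_square \<delta> (north p) j"
    unfolding vertical_square_def
    using clean_pair_second_row partner_North[OF cons north_lt] data(1) by simp
  then have first: "square_twist \<delta> (make_horizontal \<delta> (north p) j)"
    unfolding square_twist_def using cons data(1) north_lt by blast
  have "horizontal_square (make_horizontal \<delta> (north p) j) p j"
    using north_north_neq[OF data(2)] data(1, 2,4) partner_East[OF cons data(2, 1,4)]
    unfolding horizontal_square_def make_horizontal_def by (auto dest: sym)
  then have "square_twist (make_horizontal \<delta> (north p) j) (raise_pair \<delta> j p)"
    unfolding square_twist_def raise_pair_def using square_twist_consistent[OF first] data(1, 2) by blast
  then show ?thesis using first by auto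
qed

lemma clean_pair_raise_pair: "clean_pair (raise_pair \<delta> j p) j (rowshift p 2) (g - 2)"
proof -
  note data = clean_pair_data and far = rowshift_neq_first_rows[OF clean_pair_data(2)]
  have "rowshift (rowshift p 2) (g - 2) = rowshift p g"
    using rowshift_diff[of 2 g p] clean_pair_gap_ge_3 by simp
  then have top: "raise_pair \<delta> j p (rowshift (rowshift p 2) (g - 2), j) = East"
    using far[of g] data clean_pair_gap_ge_3 raise_pair_apply by simp
  have "\<not> horizontal (raise_pair \<delta> j p) (rowshift (rowshift p 2) k) j'"
    if "j' = j \<or> j' = east j" "0 < k" "k < g - 2" for k j'
  proof -
    have "rowshift (rowshift p 2) k = rowshift p (k + 2)" by (simp add: rowshift_rowshift add.commute)
    moreover have "\<not> horizontal \<delta> (rowshift p (k + 2)) j'"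
      using data(6, 7) that unfolding no_horizontal_between_def by auto
    ultimately show ?thesis
      using far[of "k + 2"] that data raise_pair_apply unfolding horizontal_def by auto
  qed
  moreover have "raise_pair \<delta> j p (rowshift p 2, j) = East"
    using raise_pair_apply[OF data(2, 1)] north_north_neq[OF data(2)] unfolding north_north by simp
  ultimately show ?thesis
    unfolding clean_pair_def parallel_pair_def no_horizontal_between_def
    using top data clean_pair_gap_ge_3 by auto
qed

lemma verticalize_raise_pair:
  "verticalize (raise_pair \<delta> j p) j (rowshift p 2) (g - 2) = verticalize \<delta> j p g"
proof (rule fun_eq_pairI)
  note data = clean_pair_data and far = rowshift_neq_first_rows[OF clean_pair_data(2)]
  fix i j'
  show "verticalize (raise_pair \<delta> j p) j (rowshift p 2) (g - 2) (i, j') = verticalize \<delta> j p g (i, j')"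
  proof (cases "i < R \<and> (j' = j \<or> j' = east j)")
    case True
    define k where "k = row_offset p i"
    have i: "i = rowshift p k" "k < R" unfolding k_def using rowshift_row_offset data(2) True by auto
    have offset: "row_offset (rowshift p 2) i = (if 2 \<le> k then k - 2 else k + R - 2)"
      unfolding k_def using row_offset_rowshift_2 data(2) True by blast
    consider "k = 0" | "k = 1" | "2 \<le> k" "k \<le> g" | "g < k" by linarith
    then show ?thesis
    proof cases
      case 1
      then have "i = p" using i data(2) by simp
      then show ?thesis using 1 True offset data raise_pair_apply unfolding verticalize_def k_def by auto
    next
      case 2
      then have "i = north p" using i unfolding north_def by simp
      then show ?thesis
        using 2 True offset data raise_pair_apply north_neq clean_pair_gap_ge_3
        unfolding verticalize_def k_def by auto
    next
      case 3
      then show ?thesis using True offset unfolding verticalize_def k_def by auto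
    next
      case 4
      then show ?thesis
        using True offset data i far[of k] clean_pair_gap_ge_3 raise_pair_apply
        unfolding verticalize_def k_def by auto
    qed
  qed (use clean_pair_data raise_pair_apply in \<open>auto simp: verticalize_def\<close>)
qed

end

lemma square_twists_verticalize:
  "consistent \<delta> \<Longrightarrow> clean_pair \<delta> j p g \<Longrightarrow> square_twist\<^sup>*\<^sup>* \<delta> (verticalize \<delta> j p g)"
proof (induction g arbitrary: p \<delta> rule: less_induct)
  case (less g)
  show ?case
  proof (cases "g = 1")
    case True
    then show ?thesis using clean_pair_gap_1 less.prems by blast
  next
    case False
    let ?\<delta>' = "raise_pair \<delta> j p"
    have "g - 2 < g" using clean_pair_gap_ge_3[OF less.prems False] by simp
    moreover have "consistent ?\<delta>'"
      using square_twists_consistent[OF square_twists_raise_pair[OF less.prems False] less.prems(1)] .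
    ultimately have "square_twist\<^sup>*\<^sup>* ?\<delta>' (verticalize ?\<delta>' j (rowshift p 2) (g - 2))"
      using less.IH clean_pair_raise_pair[OF less.prems False] by blast
    then have "square_twist\<^sup>*\<^sup>* ?\<delta>' (verticalize \<delta> j p g)"
      unfolding verticalize_raise_pair[OF less.prems False] .
    then show ?thesis using square_twists_raise_pair[OF less.prems False] by (rule rtranclp_trans[rotated])
  qed
qed

definition horizontal_vertices :: "(nat \<times> nat \<Rightarrow> dir) \<Rightarrow> (nat \<times> nat) set" where
  "horizontal_vertices \<delta> = {(i, j). i < R \<and> j < C \<and> horizontal \<delta> i j}"

lemma horizontal_vertices_verticalize:
  assumes "clean_pair \<delta> j p g"
  shows "horizontal_vertices (verticalize \<delta> j p g) \<subset> horizontal_vertices \<delta>"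
proof
  show "horizontal_vertices (verticalize \<delta> j p g) \<subseteq> horizontal_vertices \<delta>"
    unfolding horizontal_vertices_def verticalize_def horizontal_def by (auto split: if_splits)
  have p: "p < R" "j < C" "\<delta> (p, j) = East" using assms unfolding clean_pair_def parallel_pair_def by auto
  then have "verticalize \<delta> j p g (p, j) = North"
    unfolding verticalize_def using row_offset_rowshift[of p 0] by simp
  then have "(p, j) \<notin> horizontal_vertices (verticalize \<delta> j p g)" "(p, j) \<in> horizontal_vertices \<delta>"
    using p unfolding horizontal_vertices_def horizontal_def by auto
  then show "horizontal_vertices (verticalize \<delta> j p g) \<noteq> horizontal_vertices \<delta>" by blast
qed

lemma square_twists_to_all_vertical:
  "consistent \<delta> \<Longrightarrow> \<exists>\<delta>'. square_twist\<^sup>*\<^sup>* \<delta> \<delta>' \<and> consistent \<delta>' \<and> (\<forall>i<R. \<forall>j<C. \<not> horizontal \<delta>' i j)"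
proof (induction "card (horizontal_vertices \<delta>)" arbitrary: \<delta> rule: less_induct)
  case less
  show ?case
  proof (cases "horizontal_vertices \<delta> = {}")
    case True
    then show ?thesis using less.prems unfolding horizontal_vertices_def by blast
  next
    case False
    then obtain i j where "i < R" "j < C" "horizontal \<delta> i j" unfolding horizontal_vertices_def by blast
    then obtain j p g where clean: "clean_pair \<delta> j p g" using clean_pair_exists[OF less.prems] by blast
    let ?\<delta>' = "verticalize \<delta> j p g"
    have reach: "square_twist\<^sup>*\<^sup>* \<delta> ?\<delta>'" using square_twists_verticalize[OF less.prems clean] .
    have "finite (horizontal_vertices \<delta>)"
      using finite_subset[of "horizontal_vertices \<delta>" "{..<R} \<times> {..<C}"] unfolding horizontal_vertices_def
      by auto
    then have "card (horizontal_vertices ?\<delta>') < card (horizontal_vertices \<delta>)"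
      using horizontal_vertices_verticalize[OF clean] by (rule psubset_card_mono)
    then show ?thesis
      using less.hyps square_twists_consistent[OF reach less.prems] reach by (meson rtranclp_trans)
  qed
qed

section \<open>All-vertical matchings\<close>

text \<open>The matching pairing rows \<open>(0, 1), (2, 3), \<dots>\<close> of column \<open>j\<close> when \<open>ph j\<close> holds, and
  rows \<open>(1, 2), \<dots>, (R - 1, 0)\<close> otherwise.\<close>

definition vertical_dirs :: "(nat \<Rightarrow> bool) \<Rightarrow> nat \<times> nat \<Rightarrow> dir" where
  "vertical_dirs ph = (\<lambda>(i, j). if i < R \<and> j < C then (if even i = ph j then North else South) else North)"

lemma vertical_dirs_consistent: "consistent (vertical_dirs ph)"
  unfolding consistent_def
proof (intro conjI ballI allI impI)
  fix v assume "v \<in> V"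
  then show "vertical_dirs ph (nbr v (vertical_dirs ph v)) = opposite (vertical_dirs ph v)"
    using even_north even_south unfolding vertical_dirs_def by (cases v) auto
qed (auto simp: vertical_dirs_def)

lemma vertical_column_alternates:
  assumes cons: "consistent \<delta>" and j: "j < C" and vertical: "\<And>i. i < R \<Longrightarrow> \<not> horizontal \<delta> i j"
  shows "i < R \<Longrightarrow> \<delta> (i, j) = North \<longleftrightarrow> (even i \<longleftrightarrow> \<delta> (0, j) = North)"
proof (induction i)
  case (Suc i)
  then have i: "i < R" and north_i: "north i = Suc i" unfolding north_def rowshift_def by simp_all
  have "\<delta> (i, j) = North \<longleftrightarrow> \<delta> (Suc i, j) = South"
    using partner_North[OF cons i j] partner_North_rev[OF cons i j] north_i not_horizontal vertical[OF i]
    by force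
  then show ?case using Suc not_horizontal[OF vertical[OF Suc.prems]] by auto
qed simp

lemma vertical_dirs_if_no_horizontal:
  assumes cons: "consistent \<delta>" and vertical: "\<forall>i<R. \<forall>j<C. \<not> horizontal \<delta> i j"
  shows "\<delta> = vertical_dirs (\<lambda>j. j < C \<and> \<delta> (0, j) = North)"
proof (rule fun_eq_pairI)
  fix i j
  show "\<delta> (i, j) = vertical_dirs (\<lambda>j. j < C \<and> \<delta> (0, j) = North) (i, j)"
  proof (cases "i < R \<and> j < C")
    case True
    then show ?thesis
      using vertical_column_alternates[OF cons _ _ , of j i] vertical not_horizontal[of \<delta> i j]
      unfolding vertical_dirs_def by auto
  qed (use consistentD(2)[OF cons, of "(i, j)"] in \<open>auto simp: vertical_dirs_def\<close>)
qed

definition column_flip :: "(nat \<Rightarrow> bool) \<Rightarrow> (nat \<Rightarrow> bool) \<Rightarrow> bool" where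
  "column_flip ph ph' \<longleftrightarrow> (\<exists>j<C. ph j = ph (east j) \<and> ph' = ph(j := \<not> ph j, east j := \<not> ph (east j)))"

text \<open>A flip of two columns with equal phase: turn one unit square horizontal, then remove the
  resulting clean pair, whose gap wraps once around the torus.\<close>

context
  fixes ph :: "nat \<Rightarrow> bool" and j :: nat
  assumes j: "j < C" and same_phase: "ph j = ph (east j)"
begin

definition flip_start :: nat where "flip_start = (if ph j then 0 else 1)"

lemma flip_start: "flip_start < R" "even flip_start \<longleftrightarrow> ph j"
  unfolding flip_start_def using R_ge_4 by auto

lemma flip_start_twist:
  "square_twist (vertical_dirs ph) (make_horizontal (vertical_dirs ph) flip_start j)"
proof -
  have "vertical_square (vertical_dirs ph) flip_start j"
    unfolding vertical_square_def vertical_dirs_def using flip_start j same_phase even_north by auto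
  then show ?thesis unfolding square_twist_def using vertical_dirs_consistent flip_start(1) j by blast
qed

lemma flip_start_apply:
  "make_horizontal (vertical_dirs ph) flip_start j (i, j') =
    (if j' = j \<and> (i = flip_start \<or> i = north flip_start) then East
     else if j' = east j \<and> (i = flip_start \<or> i = north flip_start) then West
     else vertical_dirs ph (i, j'))"
  unfolding make_horizontal_def using north_neq[OF flip_start(1)] east_neq[OF j] by (auto dest: sym)

lemma clean_pair_flip_start:
  "clean_pair (make_horizontal (vertical_dirs ph) flip_start j) j (north flip_start) (R - 1)"
proof -
  have around: "rowshift (north flip_start) (R - 1) = flip_start"
    using south_north[OF flip_start(1)] unfolding south_def .
  have "rowshift (north flip_start) k \<noteq> flip_start" "rowshift (north flip_start) k \<noteq> north flip_start"
    if "0 < k" "k < R - 1" for k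
  proof -
    have "rowshift (north flip_start) k = rowshift flip_start (k + 1)"
      unfolding north_def rowshift_rowshift by (simp add: add.commute)
    moreover have "k + 1 < R" "k + 1 \<noteq> 0" "k + 1 \<noteq> 1" using that by auto
    ultimately show "rowshift (north flip_start) k \<noteq> flip_start"
      "rowshift (north flip_start) k \<noteq> north flip_start"
      using rowshift_inj[of "k + 1" 0 flip_start] rowshift_inj[of "k + 1" 1 flip_start] flip_start(1) R_ge_4
      unfolding north_def by auto
  qed
  then show ?thesis
    unfolding clean_pair_def parallel_pair_def no_horizontal_between_def
    using flip_start_apply around j R_ge_4 by (auto simp: horizontal_def vertical_dirs_def)
qed

lemma verticalize_flip_start:
  "verticalize (make_horizontal (vertical_dirs ph) flip_start j) j (north flip_start) (R - 1) =
    vertical_dirs (ph(j := \<not> ph j, east j := \<not> ph (east j)))"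
proof (rule fun_eq_pairI)
  fix i j'
  show "verticalize (make_horizontal (vertical_dirs ph) flip_start j) j (north flip_start) (R - 1) (i, j') =
    vertical_dirs (ph(j := \<not> ph j, east j := \<not> ph (east j))) (i, j')"
  proof (cases "i < R \<and> (j' = j \<or> j' = east j)")
    case True
    define k where "k = row_offset (north flip_start) i"
    have "rowshift (north flip_start) k = i" unfolding k_def using rowshift_row_offset True by simp
    then have "even k \<longleftrightarrow> (even i \<longleftrightarrow> \<not> ph j)"
      using even_rowshift[of "north flip_start" k] even_north flip_start(2) by auto
    moreover have "k \<le> R - 1" unfolding k_def using row_offset_lt[of "north flip_start" i] by linarith
    ultimately show ?thesis
      using True j same_phase east_neq[OF j] unfolding verticalize_def vertical_dirs_def k_def by auto
  next
    case False
    then show ?thesis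
      using flip_start_apply flip_start(1) unfolding verticalize_def vertical_dirs_def by auto
  qed
qed

end

lemma column_flip_square_twists:
  assumes "column_flip ph ph'"
  shows "square_twist\<^sup>*\<^sup>* (vertical_dirs ph) (vertical_dirs ph')"
proof -
  obtain j where j: "j < C" "ph j = ph (east j)" and ph': "ph' = ph(j := \<not> ph j, east j := \<not> ph (east j))"
    using assms unfolding column_flip_def by blast
  let ?\<delta> = "make_horizontal (vertical_dirs ph) (flip_start ph j) j"
  have "square_twist (vertical_dirs ph) ?\<delta>" using flip_start_twist[OF j] .
  moreover have "square_twist\<^sup>*\<^sup>* ?\<delta> (vertical_dirs ph')"
    using square_twists_verticalize[OF square_twist_consistent[OF calculation] clean_pair_flip_start[OF j]]
    unfolding verticalize_flip_start[OF j] ph' .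
  ultimately show ?thesis by simp
qed

lemma column_flips_square_twists:
  "column_flip\<^sup>*\<^sup>* ph ph' \<Longrightarrow> square_twist\<^sup>*\<^sup>* (vertical_dirs ph) (vertical_dirs ph')"
  by (induction rule: rtranclp_induct) (auto intro: rtranclp_trans column_flip_square_twists)

lemma vertical_dirs_cong: "(\<And>j. j < C \<Longrightarrow> ph j = ph' j) \<Longrightarrow> vertical_dirs ph = vertical_dirs ph'"
  unfolding vertical_dirs_def by (auto split: prod.splits)

text \<open>A phase is recorded by the set of columns \<open>j\<close> where it agrees with the parity of \<open>j\<close>;
  a flip inside \<open>0, \<dots>, C - 1\<close> then moves one token to a neighbouring column, and a flip of the
  columns \<open>C - 1\<close> and \<open>0\<close> (both even) removes or adds two tokens.\<close>

definition phase_of :: "nat set \<Rightarrow> nat \<Rightarrow> bool" where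
  "phase_of B j \<longleftrightarrow> j < C \<and> (j \<in> B \<longleftrightarrow> even j)"

lemma east_Suc: "Suc j < C \<Longrightarrow> east j = Suc j"
  unfolding east_def colshift_def by simp

lemma east_last: "east (C - 1) = 0"
  unfolding east_def colshift_def using C_ge_3 by simp

lemma token_move_column_flip:
  assumes "token_move C B B'"
  shows "column_flip (phase_of B) (phase_of B')"
proof -
  have "C - 1 \<noteq> 0" "even (C - 1)" using C_ge_3 odd_C by auto
  from assms consider
      j where "Suc j < C" "j \<in> B" "Suc j \<notin> B" "B' = insert (Suc j) (B - {j})"
    | j where "Suc j < C" "Suc j \<in> B" "j \<notin> B" "B' = insert j (B - {Suc j})"
    | "0 \<in> B" "C - 1 \<in> B" "B' = B - {0, C - 1}"
    | "0 \<notin> B" "C - 1 \<notin> B" "B' = insert 0 (insert (C - 1) B)"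
    unfolding token_move_def by blast
  then show ?thesis
  proof cases
    case (1 j)
    then show ?thesis unfolding column_flip_def using east_Suc[of j]
      by (intro exI[of _ j]) (auto simp: phase_of_def fun_eq_iff)
  next
    case (2 j)
    then show ?thesis unfolding column_flip_def using east_Suc[of j]
      by (intro exI[of _ j]) (auto simp: phase_of_def fun_eq_iff)
  next
    case 3
    then have "phase_of B' = (phase_of B)(C - 1 := \<not> phase_of B (C - 1), 0 := \<not> phase_of B 0)"
      using \<open>even (C - 1)\<close> C_ge_3 by (auto simp: phase_of_def fun_eq_iff)
    then show ?thesis
      unfolding column_flip_def using 3 east_last \<open>even (C - 1)\<close> C_ge_3
      by (intro exI[of _ "C - 1"]) (auto simp: phase_of_def)
  next
    case 4
    then have "phase_of B' = (phase_of B)(C - 1 := \<not> phase_of B (C - 1), 0 := \<not> phase_of B 0)"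
      using \<open>even (C - 1)\<close> C_ge_3 by (auto simp: phase_of_def fun_eq_iff)
    then show ?thesis
      unfolding column_flip_def using 4 east_last \<open>even (C - 1)\<close> C_ge_3
      by (intro exI[of _ "C - 1"]) (auto simp: phase_of_def)
  qed
qed

lemma token_moves_column_flips: "(token_move C)\<^sup>*\<^sup>* B B' \<Longrightarrow> column_flip\<^sup>*\<^sup>* (phase_of B) (phase_of B')"
  by (induction rule: rtranclp_induct) (auto intro: rtranclp.rtrancl_into_rtrancl token_move_column_flip)

lemma square_twists_to_uniform_vertical:
  assumes "consistent \<delta>"
  shows "square_twist\<^sup>*\<^sup>* \<delta> (vertical_dirs (\<lambda>_. True)) \<or> square_twist\<^sup>*\<^sup>* \<delta> (vertical_dirs (\<lambda>_. False))"
proof -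
  obtain \<delta>' where reach: "square_twist\<^sup>*\<^sup>* \<delta> \<delta>'"
    and \<delta>': "consistent \<delta>'" "\<forall>i<R. \<forall>j<C. \<not> horizontal \<delta>' i j"
    using square_twists_to_all_vertical[OF assms] by blast
  have \<delta>': "\<delta>' = vertical_dirs (\<lambda>j. j < C \<and> \<delta>' (0, j) = North)"
    using vertical_dirs_if_no_horizontal[OF \<delta>'] .
  define B where "B = {j. j < C \<and> (\<delta>' (0, j) = North \<longleftrightarrow> even j)}"
  have "vertical_dirs (\<lambda>j. j < C \<and> \<delta>' (0, j) = North) = vertical_dirs (phase_of B)"
    by (rule vertical_dirs_cong) (auto simp: B_def phase_of_def)
  with \<delta>' have "\<delta>' = vertical_dirs (phase_of B)" by (rule trans)
  with reach have start: "square_twist\<^sup>*\<^sup>* \<delta> (vertical_dirs (phase_of B))" by simp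
  have reach_target: "square_twist\<^sup>*\<^sup>* \<delta> (vertical_dirs (phase_of T))"
    if "T \<subseteq> {..<C}" "even (card B + card T)" for T
  proof -
    have "B \<subseteq> {..<C}" unfolding B_def by auto
    then have "(token_move C)\<^sup>*\<^sup>* B T" using token_moves_if_even_card_sum that by blast
    then have "square_twist\<^sup>*\<^sup>* (vertical_dirs (phase_of B)) (vertical_dirs (phase_of T))"
      by (intro column_flips_square_twists token_moves_column_flips)
    with start show ?thesis by (rule rtranclp_trans)
  qed
  have targets: "vertical_dirs (phase_of {j. j < C \<and> even j}) = vertical_dirs (\<lambda>_. True)"
    "vertical_dirs (phase_of {j. j < C \<and> odd j}) = vertical_dirs (\<lambda>_. False)"
    by (rule vertical_dirs_cong, simp add: phase_of_def)+
  have "card ({j. j < C \<and> even j} \<union> {j. j < C \<and> odd j}) =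
      card {j. j < C \<and> even j} + card {j. j < C \<and> odd j}"
    by (rule card_Un_disjoint) auto
  moreover have "{j. j < C \<and> even j} \<union> {j. j < C \<and> odd j} = {..<C}" by auto
  ultimately have "card {j. j < C \<and> even j} + card {j. j < C \<and> odd j} = C" by simp
  then have "even (card B + card {j. j < C \<and> even j}) \<or> even (card B + card {j. j < C \<and> odd j})"
    using odd_C by presburger
  then show ?thesis
    using reach_target[of "{j. j < C \<and> even j}"] reach_target[of "{j. j < C \<and> odd j}"] targets by auto
qed

section \<open>The forcing spectrum of the torus\<close>

definition shift_north :: "nat \<times> nat \<Rightarrow> nat \<times> nat" where "shift_north v = (north (fst v), snd v)"
definition shift_south :: "nat \<times> nat \<Rightarrow> nat \<times> nat" where "shift_south v = (south (fst v), snd v)"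

lemma shift_north_nbr: "v \<in> V \<Longrightarrow> shift_north (nbr v d) = nbr (shift_north v) d"
  by (cases v; cases d) (auto simp: shift_north_def)

lemma shift_south_nbr: "v \<in> V \<Longrightarrow> shift_south (nbr v d) = nbr (shift_south v) d"
  by (cases v; cases d) (auto simp: shift_south_def)

lemma shift_north_image_edge: "e \<in> E \<Longrightarrow> shift_north ` e \<in> E"
proof -
  assume "e \<in> E"
  then obtain v d where "v \<in> V" "e = {v, nbr v d}" by (rule edge_cases)
  then show ?thesis
    using edge_nbr[of "shift_north v" d] shift_north_nbr by (cases v) (auto simp: shift_north_def)
qed

lemma shift_south_image_edge: "e \<in> E \<Longrightarrow> shift_south ` e \<in> E"
proof -
  assume "e \<in> E"
  then obtain v d where "v \<in> V" "e = {v, nbr v d}" by (rule edge_cases)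
  then show ?thesis
    using edge_nbr[of "shift_south v" d] shift_south_nbr by (cases v) (auto simp: shift_south_def)
qed

lemma inverse_automorphisms_shift: "inverse_automorphisms shift_north shift_south"
  unfolding inverse_automorphisms_def
  using shift_north_image_edge shift_south_image_edge by (auto simp: shift_north_def shift_south_def)

lemma shift_south_north: "v \<in> V \<Longrightarrow> shift_south (shift_north v) = v"
  by (cases v) (simp add: shift_north_def shift_south_def)

lemma shift_north_image_V: "shift_north ` V = V"
proof
  show "shift_north ` V \<subseteq> V" by (auto simp: shift_north_def V_def)
  show "V \<subseteq> shift_north ` V"
  proof
    fix v assume "v \<in> V"
    then have "v = shift_north (shift_south v)" "shift_south v \<in> V"
      by (cases v, simp add: shift_north_def shift_south_def)+
    then show "v \<in> shift_north ` V" by blast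
  qed
qed

lemma matching_of_image: "matching_of \<delta> = (\<lambda>v. {v, nbr v (\<delta> v)}) ` V"
  unfolding matching_of_def by blast

lemma image_matching_of_shift_north:
  "(`) shift_north ` matching_of \<delta> = matching_of (\<delta> \<circ> shift_south)"
proof -
  have "(`) shift_north ` matching_of \<delta> = (\<lambda>v. {shift_north v, nbr (shift_north v) (\<delta> v)}) ` V"
    unfolding matching_of_image image_image using shift_north_nbr by (intro image_cong) auto
  also have "\<dots> = (\<lambda>w. {w, nbr w (\<delta> (shift_south w))}) ` shift_north ` V"
    unfolding image_image using shift_south_north by (intro image_cong) auto
  finally show ?thesis unfolding shift_north_image_V matching_of_image by simp
qed

lemma vertical_dirs_shift_south:
  "matching_of (vertical_dirs ph \<circ> shift_south) = matching_of (vertical_dirs (Not \<circ> ph))"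
  by (rule matching_of_cong) (auto simp: shift_south_def vertical_dirs_def even_south)

lemma forcing_number_uniform_vertical:
  "forcing_number V E (matching_of (vertical_dirs (\<lambda>_. True))) =
    forcing_number V E (matching_of (vertical_dirs (\<lambda>_. False)))"
proof -
  have "forcing_number V E (matching_of (vertical_dirs (Not \<circ> ph))) \<le>
      forcing_number V E (matching_of (vertical_dirs ph))" for ph
    using forcing_number_image_le[OF inverse_automorphisms_shift
        consistent_perfect_matching[OF vertical_dirs_consistent]]
    unfolding image_matching_of_shift_north vertical_dirs_shift_south .
  from this[of "\<lambda>_. True"] this[of "\<lambda>_. False"] show ?thesis by (simp add: comp_def)
qed

theorem continuous_forcing_spectrum: "continuous_set (forcing_spectrum V E)"
proof (rule continuous_forcing_spectrum_if_twist_connected)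
  fix M assume "pm M"
  then obtain \<delta> where \<delta>: "consistent \<delta>" "matching_of \<delta> = M" by (rule perfect_matching_as_dirs)
  then show "\<exists>M0. twist\<^sup>*\<^sup>* M M0 \<and>
      forcing_number V E M0 = forcing_number V E (matching_of (vertical_dirs (\<lambda>_. True)))"
    using square_twists_to_uniform_vertical[OF \<delta>(1)] square_twists_twists forcing_number_uniform_vertical
    by metis
qed

end

theorem corollary5p3:
  fixes n m :: nat
  assumes "n \<ge> 1" and "m \<ge> 2"
  shows "continuous_set (forcing_spectrum (torus_V n m) (torus_E n m))"
proof -
  interpret torus "2 * m" "2 * n + 1" using assms by unfold_locales auto
  have "torus_V n m = V" unfolding torus_V_def V_def ..
  moreover have "torus_E n m = E"
    unfolding torus_E_def E_def north_def east_def rowshift_def colshift_def by simp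
  ultimately show ?thesis using continuous_forcing_spectrum by simp
qed

end
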